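(* Consider the Gaussian linear model $y=X\beta_0+\varepsilon$, $\varepsilon\sim N_n(0,\sigma_0^2I_n)$ with known $\sigma_0^2$. Suppose the guidance vector $\tilde z^*$ and the active set $A_n$ are measurable with respect to a screening $\sigma$-field generated by auxiliary data independent of $y$ (so that, conditionally, they are fixed). Assume (A1), (A2), (A4), (A5), (A6), (A9), (A11) (see context) and: (B1) $A_n\supseteq\{j:|\hat\beta^{\mathrm{init}}_j|>t_n\}\cup\{j:\tilde z^*_j>u_n\}$ for a screening statistic $\hat\beta^{\mathrm{init}}$ and thresholds $t_n,u_n$; (B2) there are $r_n>t_n$, $q_n>u_n$ with $P(\min_{j\in S_0}|\hat\beta^{\mathrm{init}}_j|\ge r_n)\to1$ and $P(\min_{j\in S_0}\tilde z_j^*\ge q_n)\to1$; (B3) there is $L_n$, growing at most polylogarithmically in $p$, and $C>0$ with $P(|A_n|\le Cs_0L_n)\to1$; (B4) with $m_n=Cs_0L_n$, $\bar\epsilon_n^2=s_0\log m_n/n$, for all sufficiently large $M$ there are tests $\phi_n$ with $E_{\beta_0}\phi_n\to0$ and $\sup_{A\supseteq S_0,|A|\le m_n}\ \sup_{\beta\in\Theta(A),\|\beta-\beta_0\|_2\ge M\bar\epsilon_n}E_\beta(1-\phi_n)\le\exp(-c_T(M)n\bar\epsilon_n^2)$. Assume further that $s_0\log m_n\to\infty$; that the restricted priors satisfy, for a constant $C_F>0$ and all $A\in\mathcal A_n$, sets $\mathcal F_{n,A}\subseteq\Theta(A)$ with $\Pi_A(\mathcal F_{n,A}^c\mid\tilde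 z^* )\le e^{-C_Fn\bar\epsilon_n^2}$; that for a constant $C_D>0$ and every $\delta>0$ there are events $\Omega_{n,A}$ with $\sup_{A\in\mathcal A_n}P_{\beta_0}(\Omega^c_{n,A})\to0$ on which $\int_{\Theta(A)}\frac{f_\beta(y)}{f_{\beta_0}(y)}d\Pi_A(\beta\mid\tilde z^* )\ge e^{-(C_D+\delta)n\bar\epsilon_n^2}$; and that $\min\{c_T(M),C_F\}>C_D$ for all sufficiently large $M$. Then for all sufficiently large $M>0$, $$\Pi_{A_n}\big(\|\beta-\beta_0\|_2\ge M\bar\epsilon_n\,\big|\,y,\tilde z^*\big)\to0\quad\text{in }P_{\beta_0}\text{-probability}.$$
   Context: $S_0=\{j:\beta_{0j}\ne0\}$, $s_0=|S_0|$, $p=p_n$. Assumptions: (A1) $s_0\log p=o(n)$, $s_0\log p\to\infty$; (A2) there are $\phi_0>0$, $K\ge1$ with $\|Xv\|_2^2\ge n\phi_0^2\|v\|_2^2$ for all $v$ with at most $Ks_0$ nonzero entries; (A4) $\max_j|\tilde z_j^*|\le C_z$; (A5) $\max_{j\in S_0}|\beta_{0j}|\le B$; (A6) hyperparameters $\tau_0,a_c,b_c,\sigma_\eta$ fixed positive constants; (A9) $p_n\to\infty$, $\log p_n=o(n)$; (A11) $\|X\|_{\mathrm{op}}=O(\sqrt n)$. $\mathcal A_n=\{A\subseteq\{1,\dots,p\}:S_0\subseteq A,\ |A|\le m_n\}$, $\Theta(A)=\{\beta\in\mathbb R^p:\beta_j=0\ \forall j\notin A\}$. $f_\beta$ is the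 $N_n(X\beta,\sigma_0^2I_n)$ density; $E_\beta$, $P_{\beta_0}$ refer to $y\sim N_n(X\beta,\sigma_0^2I_n)$. Guided prior: $\kappa^2(z;\lambda,\tau,c,\eta)=\dfrac{c^2\tau^2\lambda^2e^{\eta z}}{c^2+\tau^2\lambda^2e^{\eta z}}$; independently $\lambda_j\sim C^+(0,1)$, $\tau\sim C^+(0,\tau_0)$, $c^2\sim\mathrm{IG}(a_c,b_c)$, $\eta\sim N^+(0,\sigma_\eta^2)$, and $\beta_j\sim N(0,\sigma_0^2\kappa^2(\tilde z_j^*;\lambda_j,\tau,c,\eta))$. $\Pi_A(\cdot\mid\tilde z^* )$ uses this hierarchy only for $j\in A$ and sets $\beta_j=0$ for $j\notin A$. The active posterior is $\Pi_{A}(B\mid y,\tilde z^* )=\int_{B\cap\Theta(A)}f_\beta(y)\,d\Pi_A(\beta\mid\tilde z^* )\big/\int_{\Theta(A)}f_\beta(y)\,d\Pi_A(\beta\mid\tilde z^* )$, evaluated at $A=A_n$. *)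

theory Defs
  imports "HOL-Probability.Probability"
begin

text \<open>Vectors in R^p are functions nat => real on the index set {..<p} (0-based);
  the design matrix X is nat => nat => real, X i j for i < n, j < p.\<close>

definition lin_pred :: "(nat \<Rightarrow> nat \<Rightarrow> real) \<Rightarrow> nat \<Rightarrow> (nat \<Rightarrow> real) \<Rightarrow> nat \<Rightarrow> real" where
  "lin_pred X p \<beta> i = (\<Sum>j<p. X i j * \<beta> j)"

definition data_measure ::
  "nat \<Rightarrow> nat \<Rightarrow> (nat \<Rightarrow> nat \<Rightarrow> real) \<Rightarrow> real \<Rightarrow> (nat \<Rightarrow> real) \<Rightarrow> (nat \<Rightarrow> real) measure" where
  "data_measure n p X \<sigma> \<beta> =
     PiM {..<n} (\<lambda>i. density lborel (normal_density (lin_pred X p \<beta> i) \<sigma>))"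

definition lik ::
  "nat \<Rightarrow> nat \<Rightarrow> (nat \<Rightarrow> nat \<Rightarrow> real) \<Rightarrow> real \<Rightarrow> (nat \<Rightarrow> real) \<Rightarrow> (nat \<Rightarrow> real) \<Rightarrow> real" where
  "lik n p X \<sigma> \<beta> y = (\<Prod>i<n. normal_density (lin_pred X p \<beta> i) \<sigma> (y i))"

definition l2dist :: "nat \<Rightarrow> (nat \<Rightarrow> real) \<Rightarrow> (nat \<Rightarrow> real) \<Rightarrow> real" where
  "l2dist p u v = sqrt (\<Sum>j<p. (u j - v j)^2)"

definition l2norm :: "nat \<Rightarrow> (nat \<Rightarrow> real) \<Rightarrow> real" where
  "l2norm p v = sqrt (\<Sum>j<p. (v j)^2)"

definition supp :: "nat \<Rightarrow> (nat \<Rightarrow> real) \<Rightarrow> nat set" where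
  "supp p v = {j. j < p \<and> v j \<noteq> 0}"

definition Theta :: "nat \<Rightarrow> nat set \<Rightarrow> (nat \<Rightarrow> real) set" where
  "Theta p A = {\<beta> \<in> PiE {..<p} (\<lambda>_. UNIV). \<forall>j<p. j \<notin> A \<longrightarrow> \<beta> j = 0}"

definition param_space :: "nat \<Rightarrow> (nat \<Rightarrow> real) measure" where
  "param_space p = PiM {..<p} (\<lambda>_. lborel)"

definition active_sets :: "nat \<Rightarrow> nat set \<Rightarrow> real \<Rightarrow> nat set set" where
  "active_sets p S0 m = {A. S0 \<subseteq> A \<and> A \<subseteq> {..<p} \<and> real (card A) \<le> m}"

definition half_cauchy :: "real \<Rightarrow> real measure" where
  "half_cauchy s = density lborel (\<lambda>x. ennreal (if x > 0 then 2 / (pi * s * (1 + (x / s)^2)) else 0))"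

definition inv_gamma :: "real \<Rightarrow> real \<Rightarrow> real measure" where
  "inv_gamma a b = density lborel
     (\<lambda>x. ennreal (if x > 0 then b powr a / Gamma a * x powr (- a - 1) * exp (- b / x) else 0))"

definition half_normal :: "real \<Rightarrow> real measure" where
  "half_normal s = density lborel (\<lambda>x. ennreal (if x > 0 then 2 * normal_density 0 s x else 0))"

text \<open>kappa^2(z; lambda, tau, c, eta), written in terms of c2 = c^2.\<close>
definition kappa2 :: "real \<Rightarrow> real \<Rightarrow> real \<Rightarrow> real \<Rightarrow> real \<Rightarrow> real" where
  "kappa2 z lam tau c2 eta =
     c2 * tau^2 * lam^2 * exp (eta * z) / (c2 + tau^2 * lam^2 * exp (eta * z))"

definition hyper_measure ::
  "nat set \<Rightarrow> real \<Rightarrow> real \<Rightarrow> real \<Rightarrow> real \<Rightarrow> ((nat \<Rightarrow> real) \<times> real \<times> real \<times> real) measure" where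
  "hyper_measure A \<tau>0 ac bc \<sigma>\<eta> =
     PiM A (\<lambda>_. half_cauchy 1) \<Otimes>\<^sub>M
       (half_cauchy \<tau>0 \<Otimes>\<^sub>M (inv_gamma ac bc \<Otimes>\<^sub>M half_normal \<sigma>\<eta>))"

definition guided_prior ::
  "nat \<Rightarrow> nat set \<Rightarrow> real \<Rightarrow> real \<Rightarrow> real \<Rightarrow> real \<Rightarrow> real \<Rightarrow> (nat \<Rightarrow> real) \<Rightarrow> (nat \<Rightarrow> real) measure" where
  "guided_prior p A \<sigma>0 \<tau>0 ac bc \<sigma>\<eta> z =
     hyper_measure A \<tau>0 ac bc \<sigma>\<eta> \<bind>
       (\<lambda>(lam, tau, c2, eta). PiM {..<p} (\<lambda>j.
          if j \<in> A then density lborel (normal_density 0 (sqrt (\<sigma>0^2 * kappa2 (z j) (lam j) tau c2 eta)))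
          else return lborel 0))"

definition active_posterior ::
  "nat \<Rightarrow> nat \<Rightarrow> (nat \<Rightarrow> nat \<Rightarrow> real) \<Rightarrow> real \<Rightarrow> (nat \<Rightarrow> real) measure \<Rightarrow> nat set
     \<Rightarrow> (nat \<Rightarrow> real) \<Rightarrow> (nat \<Rightarrow> real) set \<Rightarrow> real" where
  "active_posterior n p X \<sigma>0 PR A y B =
     (\<integral>\<beta>. indicator (B \<inter> Theta p A) \<beta> * lik n p X \<sigma>0 \<beta> y \<partial>PR) /
     (\<integral>\<beta>. indicator (Theta p A) \<beta> * lik n p X \<sigma>0 \<beta> y \<partial>PR)"

end

theory Submission
  imports Defs
begin

(* Fix the screening data \<omega>.  If the active set A = A_n(\<omega>) is admissible (S_0 \<subseteq> A, |A| \<le> m_n),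
   the usual testing argument applies to the restricted prior \<Pi>_A.  On the evidence event \<Omega> the
   posterior denominator is at least e^(-(C_D + \<delta>) n \<epsilon>_n\<^sup>2) f_0(y), while by Fubini the numerator,
   weighted by 1 - \<phi>_n, integrates to at most e^(-c_T n \<epsilon>_n\<^sup>2) \<Pi>_A(\<Theta>).  Hence
     P_0(\<Pi>_A(far | y) > \<epsilon>) \<le> P_0(\<Omega>\<^sup>c) + 2 E_0 \<phi>_n + (2 / \<epsilon>) \<Pi>_A(\<Theta>) e^(-(c_T - C_D - \<delta>) n \<epsilon>_n\<^sup>2),
   and every term vanishes for \<delta> = (c_T - C_D) / 2 because n \<epsilon>_n\<^sup>2 = s_0 log m_n \<rightarrow> \<infinity>.  The guided
   prior need not be normalised: its total mass is bounded, uniformly in A, by that of the hyperprior.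
   Finally (B1)-(B3) make A_n admissible with probability tending to one, and dominated convergence
   over \<omega> turns the conditional statement into convergence in probability under the joint law of
   (\<omega>, y). *)

lemma pow_div_fact_le_exp:
  fixes t :: real
  assumes "0 \<le> t"
  shows "t ^ k / fact k \<le> exp t"
proof -
  have "(\<lambda>n. t ^ n / fact n) sums exp t"
    using exp_converges[of t] by (simp add: divide_inverse mult.commute)
  with assms show ?thesis
    using sum_le_suminf[of "\<lambda>n. t ^ n / fact n" "{k}"] by (simp add: sums_iff)
qed

lemma powr_mult_exp_neg_le:
  fixes x a b :: real
  assumes x: "0 < x" "x \<le> 1" and b: "b > 0" and k: "a + 1 \<le> real k"
  shows "x powr (- a - 1) * exp (- b / x) \<le> fact k / b ^ k"
proof -
  have "(b / x) ^ k / fact k \<le> exp (b / x)"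
    using x b by (intro pow_div_fact_le_exp) simp
  then have "exp (- b / x) \<le> fact k / b ^ k * x powr real k"
    using x b by (simp add: exp_minus field_simps power_divide powr_realpow)
  then have "x powr (- a - 1) * exp (- b / x) \<le> x powr (- a - 1) * (fact k / b ^ k * x powr real k)"
    by (rule mult_left_mono) simp
  also have "\<dots> = fact k / b ^ k * x powr (real k - a - 1)"
    by (simp add: powr_add[symmetric] algebra_simps)
  also have "\<dots> \<le> fact k / b ^ k"
    using x k b by (intro mult_right_le_one_le powr_le1) auto
  finally show ?thesis .
qed

lemma ennreal_enn2real_le: "ennreal (enn2real x) \<le> x"
  by (cases "x = \<top>") (auto simp: top.not_eq_extremum)

lemma exp_ratio_tendsto_0:
  fixes a b :: real and x :: "nat \<Rightarrow> real"
  assumes "a < b" and "filterlim x at_top sequentially"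
  shows "(\<lambda>n. exp (- b * x n) / exp (- a * x n)) \<longlonglongrightarrow> 0"
proof -
  have "filterlim (\<lambda>n. (b - a) * x n) at_top sequentially"
    using assms by (intro filterlim_tendsto_pos_mult_at_top[OF tendsto_const]) auto
  then have "filterlim (\<lambda>n. exp ((b - a) * x n)) at_top sequentially"
    by (rule filterlim_compose[OF exp_at_top])
  then have "(\<lambda>n. inverse (exp ((b - a) * x n))) \<longlonglongrightarrow> 0"
    by (rule tendsto_inverse_0_at_top)
  moreover have "exp (- b * x n) / exp (- a * x n) = inverse (exp ((b - a) * x n))" for n
    by (simp add: exp_diff[symmetric] exp_minus[symmetric] algebra_simps)
  ultimately show ?thesis
    by simp
qed

lemma filterlim_mult_sqrt_div_squared_at_top:
  assumes "filterlim a at_top sequentially"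
  shows "filterlim (\<lambda>n. real n * (sqrt (a n / real n))^2) at_top sequentially"
proof -
  have "\<forall>\<^sub>F n in sequentially. 0 \<le> a n"
    using assms by (simp add: filterlim_at_top)
  moreover have "\<forall>\<^sub>F n in sequentially. (0::nat) < n"
    by (rule eventually_gt_at_top)
  ultimately have "\<forall>\<^sub>F n in sequentially. a n = real n * (sqrt (a n / real n))^2"
    by eventually_elim (simp add: real_sqrt_pow2)
  from filterlim_cong[OF refl refl this] assms show ?thesis
    by simp
qed

lemma subprob_space_normal_density:
  "subprob_space (density lborel (\<lambda>x. ennreal (normal_density \<mu> \<sigma> x)))"
proof (cases "\<sigma> = 0")
  case True
  then show ?thesis
    by (intro subprob_spaceI) (auto simp: normal_density_def emeasure_density)
next
  case False
  have "normal_density \<mu> \<sigma> = normal_density \<mu> \<bar>\<sigma>\<bar>"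
    by (simp add: normal_density_def fun_eq_iff)
  moreover have "prob_space (density lborel (\<lambda>x. ennreal (normal_density \<mu> \<bar>\<sigma>\<bar> x)))"
    using False by (intro prob_space_normal_density) auto
  ultimately show ?thesis
    by (simp add: prob_space_imp_subprob_space)
qed

lemma subprob_space_PiM:
  assumes "finite I" and "\<And>i. subprob_space (M i)"
  shows "subprob_space (PiM I M)"
proof -
  interpret product_sigma_finite M
    using assms(2) by (auto simp: product_sigma_finite_def intro: subprob_space.axioms finite_measure.sigma_finite_measure)
  have "emeasure (PiM I M) (space (PiM I M)) = (\<Prod>i\<in>I. emeasure (M i) (space (M i)))"
    unfolding space_PiM using assms(1) by (rule emeasure_PiM) auto
  also have "\<dots> \<le> 1"
    by (intro prod_le_1) (auto intro: subprob_space.subprob_emeasure_le_1[OF assms(2)])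
  finally show ?thesis
    using assms(2) by (intro subprob_spaceI) (auto simp: space_PiM PiE_eq_empty_iff subprob_space.subprob_not_empty)
qed

lemma emeasure_pair_measure_space:
  assumes "finite_measure M1" and "finite_measure M2"
  shows "emeasure (M1 \<Otimes>\<^sub>M M2) (space (M1 \<Otimes>\<^sub>M M2)) = emeasure M1 (space M1) * emeasure M2 (space M2)"
proof -
  interpret M2: finite_measure M2 by fact
  show ?thesis
    unfolding space_pair_measure by (rule M2.emeasure_pair_measure_Times) auto
qed

lemma (in prob_space) prob_Int_ge:
  assumes "A \<in> events" and "B \<in> events"
  shows "prob A + prob B - 1 \<le> prob (A \<inter> B)"
proof -
  have "prob (A - B) \<le> prob (space M - B)"
    using assms by (intro finite_measure_mono) (auto dest: sets.sets_into_space)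
  then show ?thesis
    using finite_measure_Diff'[OF assms] prob_compl[OF assms(2)] by linarith
qed

lemma sets_level_set_finite_range:
  fixes An :: "'w \<Rightarrow> nat set"
  assumes "\<And>A. {\<omega> \<in> space Q. An \<omega> = A} \<in> sets Q" and "\<And>\<omega>. \<omega> \<in> space Q \<Longrightarrow> An \<omega> \<subseteq> {..<p}"
  shows "{\<omega> \<in> space Q. R (An \<omega>)} \<in> sets Q"
proof -
  have "{\<omega> \<in> space Q. R (An \<omega>)} = (\<Union>A\<in>{A \<in> Pow {..<p}. R A}. {\<omega> \<in> space Q. An \<omega> = A})"
    using assms(2) by auto
  also have "\<dots> \<in> sets Q"
  proof (rule sets.finite_UN)
    show "finite {A \<in> Pow {..<p}. R A}"
      by (rule finite_subset[of _ "Pow {..<p}"]) auto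
  qed (use assms(1) in auto)
  finally show ?thesis .
qed

lemma measure_pair_measure_le_sections:
  fixes Q :: "'w measure" and \<nu> :: "'y measure"
  assumes Q: "prob_space Q" and \<nu>: "prob_space \<nu>" and E: "E \<in> sets (Q \<Otimes>\<^sub>M \<nu>)" and G: "G \<in> sets Q"
  shows "measure (Q \<Otimes>\<^sub>M \<nu>) E \<le> (\<integral>\<omega>. indicator G \<omega> * measure \<nu> (Pair \<omega> -` E) \<partial>Q) + (1 - measure Q G)"
proof -
  interpret Q: prob_space Q
    by (rule Q)
  interpret \<nu>: prob_space \<nu>
    by (rule \<nu>)
  define h where "h \<omega> = indicator G \<omega> * measure \<nu> (Pair \<omega> -` E)" for \<omega>
  have h_meas: "h \<in> borel_measurable Q"
    unfolding h_def measure_def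
    using G \<nu>.measurable_emeasure_Pair[OF E] by (intro borel_measurable_times borel_measurable_indicator borel_measurable_enn2real)
  have h_bounds: "0 \<le> h \<omega> \<and> h \<omega> \<le> 1" for \<omega>
    by (simp add: h_def indicator_def \<nu>.prob_le_1)
  have "emeasure (Q \<Otimes>\<^sub>M \<nu>) E = (\<integral>\<^sup>+\<omega>. emeasure \<nu> (Pair \<omega> -` E) \<partial>Q)"
    by (rule \<nu>.emeasure_pair_measure_alt[OF E])
  also have "\<dots> \<le> (\<integral>\<^sup>+\<omega>. ennreal (h \<omega>) + indicator (space Q - G) \<omega> \<partial>Q)"
  proof (rule nn_integral_mono)
    fix \<omega> assume "\<omega> \<in> space Q"
    then show "emeasure \<nu> (Pair \<omega> -` E) \<le> ennreal (h \<omega>) + indicator (space Q - G) \<omega>"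
      by (cases "\<omega> \<in> G") (simp_all add: h_def \<nu>.emeasure_eq_measure \<nu>.prob_le_1)
  qed
  also have "\<dots> = (\<integral>\<^sup>+\<omega>. ennreal (h \<omega>) \<partial>Q) + emeasure Q (space Q - G)"
    using h_meas G by (subst nn_integral_add) auto
  also have "\<dots> = ennreal ((\<integral>\<omega>. h \<omega> \<partial>Q) + (1 - measure Q G))"
    using h_meas h_bounds G
    by (simp add: nn_integral_eq_integral Q.integrable_const_bound[where B = 1] Q.emeasure_eq_measure
        Q.prob_compl integral_nonneg_AE ennreal_plus)
  finally have "emeasure (Q \<Otimes>\<^sub>M \<nu>) E \<le> ennreal ((\<integral>\<omega>. h \<omega> \<partial>Q) + (1 - measure Q G))" .
  moreover have "0 \<le> (\<integral>\<omega>. h \<omega> \<partial>Q)"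
    using h_bounds by (intro integral_nonneg_AE AE_I2) simp
  ultimately show ?thesis
    using Q.prob_le_1[of G] unfolding measure_def[of "Q \<Otimes>\<^sub>M \<nu>"] h_def
    by (intro enn2real_leI) simp_all
qed

lemma measure_pair_measure_tendsto_0:
  fixes Q :: "'w measure" and \<nu> :: "nat \<Rightarrow> 'y measure"
  assumes Q: "prob_space Q" and \<nu>: "\<And>n. prob_space (\<nu> n)"
    and E: "\<And>n. E n \<in> sets (Q \<Otimes>\<^sub>M \<nu> n)" and G: "\<And>n. G n \<in> sets Q"
    and G_prob: "(\<lambda>n. measure Q (G n)) \<longlonglongrightarrow> 1"
    and sections: "\<And>\<omega>. \<omega> \<in> space Q \<Longrightarrow> (\<lambda>n. indicator (G n) \<omega> * measure (\<nu> n) (Pair \<omega> -` E n)) \<longlonglongrightarrow> 0"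
  shows "(\<lambda>n. measure (Q \<Otimes>\<^sub>M \<nu> n) (E n)) \<longlonglongrightarrow> 0"
proof -
  interpret Q: prob_space Q
    by (rule Q)
  define h where "h n \<omega> = indicator (G n) \<omega> * measure (\<nu> n) (Pair \<omega> -` E n)" for n \<omega>
  have "(\<lambda>n. \<integral>\<omega>. h n \<omega> \<partial>Q) \<longlonglongrightarrow> (\<integral>\<omega>. 0 \<partial>Q)"
  proof (rule integral_dominated_convergence[where w = "\<lambda>_. 1"])
    show "h n \<in> borel_measurable Q" for n
      unfolding h_def measure_def
      using G sigma_finite_measure.measurable_emeasure_Pair[OF prob_space_imp_sigma_finite[OF \<nu>] E]
      by (intro borel_measurable_times borel_measurable_indicator borel_measurable_enn2real)
    show "AE \<omega> in Q. (\<lambda>n. h n \<omega>) \<longlonglongrightarrow> 0"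
      using sections unfolding h_def by (intro AE_I2) simp
    show "AE \<omega> in Q. norm (h n \<omega>) \<le> 1" for n
      using prob_space.prob_le_1[OF \<nu>] by (intro AE_I2) (simp add: h_def indicator_def)
  qed simp_all
  then have "(\<lambda>n. (\<integral>\<omega>. h n \<omega> \<partial>Q) + (1 - measure Q (G n))) \<longlonglongrightarrow> 0 + (1 - 1)"
    by (intro tendsto_intros G_prob) simp
  then have lim: "(\<lambda>n. (\<integral>\<omega>. h n \<omega> \<partial>Q) + (1 - measure Q (G n))) \<longlonglongrightarrow> 0"
    by simp
  have bound: "measure (Q \<Otimes>\<^sub>M \<nu> n) (E n) \<le> (\<integral>\<omega>. h n \<omega> \<partial>Q) + (1 - measure Q (G n))" for n
    unfolding h_def using Q \<nu> E G by (rule measure_pair_measure_le_sections)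
  show ?thesis
    by (rule tendsto_sandwich[OF _ always_eventually[OF allI[OF bound]] tendsto_const lim]) simp
qed

section \<open>Testing bounds for posterior probabilities\<close>

lemma nn_integral_type_II_error_le:
  fixes prior :: "'b measure" and \<mu> :: "'y measure" and L :: "'b \<Rightarrow> 'y \<Rightarrow> real"
  assumes prior: "sigma_finite_measure prior" and \<mu>: "sigma_finite_measure \<mu>"
    and L: "(\<lambda>(\<beta>, y). L \<beta> y) \<in> borel_measurable (prior \<Otimes>\<^sub>M \<mu>)" "\<And>\<beta> y. 0 \<le> L \<beta> y"
    and P_prob: "\<And>\<beta>. prob_space (density \<mu> (\<lambda>y. ennreal (L \<beta> y)))"
    and U: "U \<in> sets prior"
    and \<phi>: "\<phi> \<in> borel_measurable \<mu>" "\<And>y. 0 \<le> \<phi> y \<and> \<phi> y \<le> 1"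
    and tail: "\<And>\<beta>. \<beta> \<in> U \<Longrightarrow> (\<integral>y. 1 - \<phi> y \<partial>density \<mu> (\<lambda>y. ennreal (L \<beta> y))) \<le> \<tau>"
  shows "(\<integral>\<^sup>+y. ennreal (1 - \<phi> y) * (\<integral>\<^sup>+\<beta>. ennreal (indicator U \<beta> * L \<beta> y) \<partial>prior) \<partial>\<mu>)
    \<le> ennreal \<tau> * emeasure prior (space prior)"
proof -
  interpret pair_sigma_finite prior \<mu>
    using prior \<mu> by (rule pair_sigma_finite.intro)
  have [measurable]: "(\<lambda>(\<beta>, y). L \<beta> y) \<in> borel_measurable (prior \<Otimes>\<^sub>M \<mu>)" "U \<in> sets prior" "\<phi> \<in> borel_measurable \<mu>"
    using L U \<phi> by auto
  have type_II: "(\<integral>\<^sup>+y. ennreal (1 - \<phi> y) * ennreal (L \<beta> y) \<partial>\<mu>) \<le> ennreal \<tau>" if "\<beta> \<in> U" for \<beta>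
  proof -
    let ?P = "density \<mu> (\<lambda>y. ennreal (L \<beta> y))"
    interpret P: prob_space ?P
      by (rule P_prob)
    have L_\<beta> [measurable]: "L \<beta> \<in> borel_measurable \<mu>"
      using measurable_Pair2[OF L(1)] sets.sets_into_space[OF U] that by auto
    have "(\<integral>\<^sup>+y. ennreal (1 - \<phi> y) * ennreal (L \<beta> y) \<partial>\<mu>) = (\<integral>\<^sup>+y. ennreal (1 - \<phi> y) \<partial>?P)"
      by (simp add: nn_integral_density mult.commute)
    also have "\<dots> = ennreal (\<integral>y. 1 - \<phi> y \<partial>?P)"
      using \<phi> by (intro nn_integral_eq_integral P.integrable_const_bound[where B = 1]) auto
    also have "\<dots> \<le> ennreal \<tau>"
      using tail[OF that] by (rule ennreal_leI)
    finally show ?thesis .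
  qed
  have "(\<integral>\<^sup>+y. ennreal (1 - \<phi> y) * (\<integral>\<^sup>+\<beta>. ennreal (indicator U \<beta> * L \<beta> y) \<partial>prior) \<partial>\<mu>)
      = (\<integral>\<^sup>+y. \<integral>\<^sup>+\<beta>. ennreal (1 - \<phi> y) * ennreal (indicator U \<beta> * L \<beta> y) \<partial>prior \<partial>\<mu>)"
    using measurable_Pair1[OF L(1)]
    by (intro nn_integral_cong nn_integral_cmult[symmetric]) (auto simp: split_beta')
  also have "\<dots> = (\<integral>\<^sup>+\<beta>. \<integral>\<^sup>+y. ennreal (1 - \<phi> y) * ennreal (indicator U \<beta> * L \<beta> y) \<partial>\<mu> \<partial>prior)"
    by (rule Fubini') measurable
  also have "\<dots> \<le> (\<integral>\<^sup>+\<beta>. ennreal \<tau> \<partial>prior)"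
    by (intro nn_integral_mono) (auto simp: indicator_def type_II)
  also have "\<dots> = ennreal \<tau> * emeasure prior (space prior)"
    by simp
  finally show ?thesis .
qed

lemma scaled_likelihood_le_of_posterior_gt:
  fixes \<epsilon> ex l num den \<phi> :: real
  assumes evidence: "ex * l \<le> den" and pos: "0 < ex" "0 < l" "0 < \<epsilon>"
    and post: "\<epsilon> < num / den" and accept: "\<phi> < 1 / 2" and num: "0 \<le> num"
  shows "\<epsilon> * ex / 2 * l \<le> (1 - \<phi>) * num"
proof -
  have "0 < den"
    using evidence pos by (smt (verit) mult_pos_pos)
  with post evidence pos have "\<epsilon> * (ex * l) < num"
    by (smt (verit) mult_left_mono pos_less_divide_eq)
  moreover have "1 / 2 * num \<le> (1 - \<phi>) * num"
    using accept num by (intro mult_right_mono) auto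
  ultimately show ?thesis
    by simp
qed

lemma measure_posterior_gt_accept_le:
  fixes prior :: "'b measure" and \<mu> :: "'y measure" and L :: "'b \<Rightarrow> 'y \<Rightarrow> real" and U T :: "'b set"
  defines "P \<equiv> \<lambda>\<beta>. density \<mu> (\<lambda>y. ennreal (L \<beta> y))"
  assumes prior: "finite_measure prior" and \<mu>: "sigma_finite_measure \<mu>"
    and L: "(\<lambda>(\<beta>, y). L \<beta> y) \<in> borel_measurable (prior \<Otimes>\<^sub>M \<mu>)" "\<And>\<beta> y. 0 \<le> L \<beta> y"
    and L0: "L \<beta>0 \<in> borel_measurable \<mu>" "\<And>y. 0 < L \<beta>0 y"
    and P_prob: "\<And>\<beta>. prob_space (P \<beta>)"
    and U: "U \<in> sets prior"
    and \<phi>: "\<phi> \<in> borel_measurable \<mu>" "\<And>y. 0 \<le> \<phi> y \<and> \<phi> y \<le> 1"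
    and tail: "\<And>\<beta>. \<beta> \<in> U \<Longrightarrow> (\<integral>y. 1 - \<phi> y \<partial>P \<beta>) \<le> \<tau>" and \<tau>: "0 \<le> \<tau>"
    and ex: "0 < ex" and \<epsilon>: "0 < \<epsilon>"
    and S: "S \<in> sets \<mu>"
    and S_bad: "\<And>y. y \<in> S \<Longrightarrow> ex \<le> (\<integral>\<beta>. indicator T \<beta> * (L \<beta> y / L \<beta>0 y) \<partial>prior) \<and> \<phi> y < 1 / 2
      \<and> \<epsilon> < (\<integral>\<beta>. indicator U \<beta> * L \<beta> y \<partial>prior) / (\<integral>\<beta>. indicator T \<beta> * L \<beta> y \<partial>prior)"
  shows "measure (P \<beta>0) S \<le> 2 * \<tau> * measure prior (space prior) / (\<epsilon> * ex)"
proof -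
  interpret prior: finite_measure prior
    by (rule prior)
  interpret P0: prob_space "P \<beta>0"
    by (rule P_prob)
  have [measurable]: "L \<beta>0 \<in> borel_measurable \<mu>" "S \<in> sets \<mu>" "U \<in> sets prior"
    using L0 S U by auto
  define c where "c = \<epsilon> * ex / 2"
  have c: "0 < c"
    using \<epsilon> ex by (simp add: c_def)
  define N where "N y = (\<integral>\<^sup>+\<beta>. ennreal (indicator U \<beta> * L \<beta> y) \<partial>prior)" for y
  have pointwise: "ennreal (c * L \<beta>0 y) \<le> ennreal (1 - \<phi> y) * N y" if y: "y \<in> S" for y
  proof -
    define num where "num = (\<integral>\<beta>. indicator U \<beta> * L \<beta> y \<partial>prior)"
    have "ex \<le> (\<integral>\<beta>. indicator T \<beta> * L \<beta> y \<partial>prior) / L \<beta>0 y"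
      using S_bad[OF y] by (simp add: integral_divide_zero)
    then have "ex * L \<beta>0 y \<le> (\<integral>\<beta>. indicator T \<beta> * L \<beta> y \<partial>prior)"
      using L0(2) by (simp add: pos_le_divide_eq)
    moreover have num_nonneg: "0 \<le> num"
      using L(2) by (simp add: num_def)
    ultimately have "c * L \<beta>0 y \<le> (1 - \<phi> y) * num"
      unfolding c_def num_def using S_bad[OF y] ex L0(2) \<epsilon>
      by (intro scaled_likelihood_le_of_posterior_gt) auto
    then have "ennreal (c * L \<beta>0 y) \<le> ennreal (1 - \<phi> y) * ennreal num"
      using \<phi>(2)[of y] num_nonneg by (simp add: ennreal_mult[symmetric] ennreal_leI)
    also have "ennreal num \<le> N y"
      unfolding num_def N_def using measurable_Pair1[OF L(1), of y] L(2) sets.sets_into_space[OF S] y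
      by (subst integral_eq_nn_integral) (auto simp: ennreal_enn2real_le)
    finally show ?thesis
      by (simp add: mult_left_mono)
  qed
  have "ennreal c * emeasure (P \<beta>0) S = ennreal c * (\<integral>\<^sup>+y. ennreal (L \<beta>0 y) * indicator S y \<partial>\<mu>)"
    using S by (simp add: P_def emeasure_density)
  also have "\<dots> = (\<integral>\<^sup>+y. ennreal (c * L \<beta>0 y) * indicator S y \<partial>\<mu>)"
    using c L0(2) by (simp add: nn_integral_cmult[symmetric] ennreal_mult mult.assoc less_imp_le)
  also have "\<dots> \<le> (\<integral>\<^sup>+y. ennreal (1 - \<phi> y) * N y \<partial>\<mu>)"
    by (intro nn_integral_mono) (auto simp: pointwise split: split_indicator)
  also have "\<dots> \<le> ennreal \<tau> * emeasure prior (space prior)"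
    unfolding N_def
    by (rule nn_integral_type_II_error_le[OF prior.sigma_finite_measure_axioms \<mu> L
          P_prob[unfolded P_def] U \<phi> tail[unfolded P_def]])
  finally have "ennreal c * ennreal (measure (P \<beta>0) S) \<le> ennreal (\<tau> * measure prior (space prior))"
    using \<tau> by (simp add: P0.emeasure_eq_measure prior.emeasure_eq_measure ennreal_mult)
  then have "c * measure (P \<beta>0) S \<le> \<tau> * measure prior (space prior)"
    using c \<tau> by (simp add: ennreal_mult[symmetric] ennreal_le_iff)
  then show ?thesis
    using \<epsilon> ex by (simp add: c_def field_simps)
qed

lemma posterior_tail_bound:
  fixes prior :: "'b measure" and \<mu> :: "'y measure" and L :: "'b \<Rightarrow> 'y \<Rightarrow> real" and U T :: "'b set"
  defines "P \<equiv> \<lambda>\<beta>. density \<mu> (\<lambda>y. ennreal (L \<beta> y))"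
  defines "post \<equiv> \<lambda>y. (\<integral>\<beta>. indicator U \<beta> * L \<beta> y \<partial>prior) / (\<integral>\<beta>. indicator T \<beta> * L \<beta> y \<partial>prior)"
  assumes prior: "finite_measure prior" and \<mu>: "sigma_finite_measure \<mu>"
    and L: "(\<lambda>(\<beta>, y). L \<beta> y) \<in> borel_measurable (prior \<Otimes>\<^sub>M \<mu>)" "\<And>\<beta> y. 0 \<le> L \<beta> y"
    and L0: "L \<beta>0 \<in> borel_measurable \<mu>" "\<And>y. 0 < L \<beta>0 y"
    and P_prob: "\<And>\<beta>. prob_space (P \<beta>)"
    and U: "U \<in> sets prior" and T: "T \<in> sets prior"
    and \<phi>: "\<phi> \<in> borel_measurable \<mu>" "\<And>y. 0 \<le> \<phi> y \<and> \<phi> y \<le> 1"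
    and tail: "\<And>\<beta>. \<beta> \<in> U \<Longrightarrow> (\<integral>y. 1 - \<phi> y \<partial>P \<beta>) \<le> \<tau>" and \<tau>: "0 \<le> \<tau>"
    and \<Omega>: "\<Omega> \<in> sets \<mu>"
    and evidence: "\<And>y. y \<in> \<Omega> \<Longrightarrow> ex \<le> (\<integral>\<beta>. indicator T \<beta> * (L \<beta> y / L \<beta>0 y) \<partial>prior)"
    and ex: "0 < ex" and \<epsilon>: "0 < \<epsilon>"
  shows "measure (P \<beta>0) {y \<in> space \<mu>. \<epsilon> < post y}
    \<le> measure (P \<beta>0) (space \<mu> - \<Omega>) + 2 * (\<integral>y. \<phi> y \<partial>P \<beta>0) + 2 * \<tau> * measure prior (space prior) / (\<epsilon> * ex)"
proof -
  interpret P0: prob_space "P \<beta>0"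
    by (rule P_prob)
  have [measurable]: "(\<lambda>(y, \<beta>). L \<beta> y) \<in> borel_measurable (\<mu> \<Otimes>\<^sub>M prior)"
    using measurable_pair_swap[OF L(1)] by (simp add: split_beta')
  have [measurable]: "U \<in> sets prior" "T \<in> sets prior" "\<phi> \<in> borel_measurable \<mu>" "\<Omega> \<in> sets \<mu>"
    using U T \<phi> \<Omega> by auto
  have sets_P0 [measurable_cong]: "sets (P \<beta>0) = sets \<mu>" and space_P0: "space (P \<beta>0) = space \<mu>"
    by (simp_all add: P_def)
  interpret prior: finite_measure prior
    by (rule prior)
  define Bad where "Bad = {y \<in> space \<mu>. \<epsilon> < post y}"
  define Good where "Good = Bad \<inter> \<Omega> \<inter> {y \<in> space \<mu>. \<phi> y < 1 / 2}"
  have Good_sets: "Good \<in> sets \<mu>"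
    unfolding Good_def Bad_def post_def by measurable
  have good: "measure (P \<beta>0) Good \<le> 2 * \<tau> * measure prior (space prior) / (\<epsilon> * ex)"
    unfolding P_def
    by (rule measure_posterior_gt_accept_le[where T = T, OF prior \<mu> L L0 P_prob[unfolded P_def] U \<phi> tail[unfolded P_def]
          \<tau> ex \<epsilon> Good_sets])
       (use evidence in \<open>auto simp: Good_def Bad_def post_def integral_divide_zero\<close>)
  have markov: "measure (P \<beta>0) {y \<in> space \<mu>. 1 / 2 \<le> \<phi> y} \<le> 2 * (\<integral>y. \<phi> y \<partial>P \<beta>0)"
    using integral_Markov_inequality_measure[of "P \<beta>0" \<phi> "space \<mu>" "1 / 2"] \<phi>
    by (auto simp: space_P0 P0.integrable_const_bound[where B = 1])
  have "Bad \<subseteq> (space \<mu> - \<Omega>) \<union> {y \<in> space \<mu>. 1 / 2 \<le> \<phi> y} \<union> Good"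
    by (auto simp: Bad_def Good_def)
  then have "measure (P \<beta>0) Bad \<le> measure (P \<beta>0) ((space \<mu> - \<Omega>) \<union> {y \<in> space \<mu>. 1 / 2 \<le> \<phi> y} \<union> Good)"
    using Good_sets by (intro P0.finite_measure_mono) (auto simp: sets_P0)
  also have "\<dots> \<le> measure (P \<beta>0) (space \<mu> - \<Omega>) + measure (P \<beta>0) {y \<in> space \<mu>. 1 / 2 \<le> \<phi> y} + measure (P \<beta>0) Good"
    using Good_sets
    by (intro order.trans[OF measure_subadditive] add_right_mono measure_subadditive)
       (auto simp: sets_P0 P0.emeasure_finite)
  finally show ?thesis
    using markov good unfolding Bad_def by linarith
qed

section \<open>Total mass of the guided prior\<close>

lemma sets_half_cauchy [measurable_cong, simp]: "sets (half_cauchy s) = sets borel"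
  by (simp add: half_cauchy_def)

lemma sets_inv_gamma [measurable_cong, simp]: "sets (inv_gamma a b) = sets borel"
  by (simp add: inv_gamma_def)

lemma sets_half_normal [measurable_cong, simp]: "sets (half_normal s) = sets borel"
  by (simp add: half_normal_def)

lemma subprob_space_half_cauchy:
  assumes s: "s > 0"
  shows "subprob_space (half_cauchy s)"
proof -
  define g where "g x = 2 / (pi * s * (1 + (x / s)^2))" for x
  have "emeasure (half_cauchy s) (space (half_cauchy s)) = (\<integral>\<^sup>+x. ennreal (if 0 < x then g x else 0) \<partial>lborel)"
    unfolding half_cauchy_def g_def by (simp add: emeasure_density)
  also have "\<dots> \<le> (\<integral>\<^sup>+x\<in>{0..}. ennreal (g x) \<partial>lborel)"
    by (intro nn_integral_mono) (auto split: split_indicator)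
  also have "\<dots> = ennreal (1 - 2 / pi * arctan (0 / s))"
  proof (rule nn_integral_FTC_atLeast)
    show "g \<in> borel_measurable borel"
      unfolding g_def by measurable
    show "((\<lambda>x. 2 / pi * arctan (x / s)) has_real_derivative g x) (at x)" for x
      using s by (auto intro!: derivative_eq_intros simp: g_def divide_simps power2_eq_square)
    show "0 \<le> g x" for x
      using s by (simp add: g_def add_pos_nonneg)
    have "filterlim (\<lambda>x. x / s) at_top at_top"
      using filterlim_tendsto_pos_mult_at_top[OF tendsto_const[of "1 / s"] _ filterlim_ident] s by simp
    then have "((\<lambda>x. arctan (x / s)) \<longlongrightarrow> pi / 2) at_top"
      by (rule filterlim_compose[OF tendsto_arctan_at_top])
    then show "((\<lambda>x. 2 / pi * arctan (x / s)) \<longlongrightarrow> 1) at_top"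
      using tendsto_mult[OF tendsto_const[of "2 / pi"]] by fastforce
  qed
  finally show ?thesis
    by (intro subprob_spaceI) (auto simp: half_cauchy_def)
qed

lemma emeasure_half_normal_le_2: "emeasure (half_normal s) (space (half_normal s)) \<le> 2"
proof -
  have "emeasure (half_normal s) (space (half_normal s))
      = (\<integral>\<^sup>+x. ennreal (if 0 < x then 2 * normal_density 0 s x else 0) \<partial>lborel)"
    unfolding half_normal_def by (simp add: emeasure_density)
  also have "\<dots> \<le> (\<integral>\<^sup>+x. 2 * ennreal (normal_density 0 s x) \<partial>lborel)"
    by (intro nn_integral_mono) (auto simp: ennreal_mult normal_density_nonneg)
  also have "\<dots> = 2 * emeasure (density lborel (\<lambda>x. ennreal (normal_density 0 s x))) UNIV"
    by (simp add: nn_integral_cmult emeasure_density)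
  also have "\<dots> \<le> 2 * 1"
    using subprob_space.subprob_emeasure_le_1[OF subprob_space_normal_density]
    by (intro mult_left_mono) auto
  finally show ?thesis
    by simp
qed

lemma inv_gamma_density_le:
  fixes a b c x :: real
  assumes b: "b > 0" and c: "c \<ge> 0" and k: "a + 1 \<le> real k"
  shows "ennreal (if x > 0 then c * x powr (- a - 1) * exp (- b / x) else 0)
    \<le> ennreal (c * (fact k / b ^ k) * indicator {0..1} x) + ennreal (c * x powr (- a - 1) * indicator {1..} x)"
proof (cases "0 < x \<and> x \<le> 1")
  case True
  then have "c * (x powr (- a - 1) * exp (- b / x)) \<le> c * (fact k / b ^ k)"
    using c b k by (intro mult_left_mono powr_mult_exp_neg_le) auto
  with True show ?thesis
    by (auto simp: mult.assoc intro!: add_increasing2 ennreal_leI)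
next
  case False
  have "x > 1 \<Longrightarrow> x powr (- a - 1) * exp (- b / x) \<le> x powr (- a - 1)"
    using b by (intro mult_right_le_one_le) auto
  with False c show ?thesis
    by (auto intro!: add_increasing ennreal_leI mult_left_mono simp: mult.assoc)
qed

lemma emeasure_inv_gamma_finite:
  assumes a: "a > 0" and b: "b > 0"
  shows "emeasure (inv_gamma a b) (space (inv_gamma a b)) < \<infinity>"
proof -
  define c where "c = b powr a / Gamma a"
  have c: "c \<ge> 0"
    using a b Gamma_real_pos[of a] by (simp add: c_def)
  define k where "k = nat \<lceil>a + 1\<rceil>"
  have k: "a + 1 \<le> real k"
    unfolding k_def by linarith
  define d where "d = c * (fact k / b ^ k)"
  have d: "d \<ge> 0"
    using b c by (simp add: d_def)
  have "emeasure (inv_gamma a b) (space (inv_gamma a b))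
      = (\<integral>\<^sup>+x. ennreal (if x > 0 then c * x powr (- a - 1) * exp (- b / x) else 0) \<partial>lborel)"
    unfolding inv_gamma_def c_def by (simp add: emeasure_density)
  also have "\<dots> \<le> (\<integral>\<^sup>+x. ennreal (d * indicator {0..1} x) + ennreal (c * x powr (- a - 1) * indicator {1..} x) \<partial>lborel)"
    unfolding d_def using b c k by (intro nn_integral_mono inv_gamma_density_le)
  also have "\<dots> = (\<integral>\<^sup>+x. ennreal (d * indicator {0..1::real} x) \<partial>lborel)
      + (\<integral>\<^sup>+x. ennreal (c * x powr (- a - 1) * indicator {1..} x) \<partial>lborel)"
    by (rule nn_integral_add; measurable)
  also have "(\<integral>\<^sup>+x. ennreal (d * indicator {0..1::real} x) \<partial>lborel) = ennreal d"
    using d by (simp add: ennreal_mult ennreal_indicator nn_integral_cmult_indicator)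
  also have "(\<integral>\<^sup>+x. ennreal (c * x powr (- a - 1) * indicator {1..} x) \<partial>lborel)
      = (\<integral>\<^sup>+x\<in>{1..}. ennreal (c * x powr (- a - 1)) \<partial>lborel)"
    by (intro nn_integral_cong) (auto split: split_indicator)
  also have "\<dots> = ennreal (0 - (- c * 1 powr (- a) / a))"
  proof (rule nn_integral_FTC_atLeast)
    show "((\<lambda>x. - c * x powr (- a) / a) has_real_derivative c * x powr (- a - 1)) (at x)"
      if "1 \<le> x" for x
      using that a by (auto intro!: derivative_eq_intros simp: field_simps)
    have "((\<lambda>x. x powr (- a)) \<longlongrightarrow> 0) at_top"
      using a by (intro tendsto_neg_powr filterlim_ident) auto
    from tendsto_mult[OF tendsto_const[of "- c / a"] this]
    show "((\<lambda>x. - c * x powr (- a) / a) \<longlongrightarrow> 0) at_top"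
      by simp
  qed (use c in auto)
  finally show ?thesis
    by (rule le_less_trans) simp
qed

lemma
  assumes "finite A" and "\<tau>0 > 0" "ac > 0" "bc > 0"
  shows finite_measure_hyper_measure: "finite_measure (hyper_measure A \<tau>0 ac bc \<sigma>\<eta>)"
    and emeasure_hyper_measure_le: "emeasure (hyper_measure A \<tau>0 ac bc \<sigma>\<eta>) (space (hyper_measure A \<tau>0 ac bc \<sigma>\<eta>))
      \<le> 2 * emeasure (inv_gamma ac bc) (space (inv_gamma ac bc))"
proof -
  have lam: "subprob_space (PiM A (\<lambda>_. half_cauchy 1))"
    using assms(1) by (intro subprob_space_PiM subprob_space_half_cauchy) auto
  have tau: "subprob_space (half_cauchy \<tau>0)"
    using assms(2) by (rule subprob_space_half_cauchy)
  have c2: "finite_measure (inv_gamma ac bc)"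
    using emeasure_inv_gamma_finite[OF assms(3,4)] by (intro finite_measureI) auto
  have eta: "finite_measure (half_normal \<sigma>\<eta>)"
    using emeasure_half_normal_le_2[of \<sigma>\<eta>] by (intro finite_measureI) (auto simp: top_unique)
  note fin = subprob_space.axioms(1)[OF lam] subprob_space.axioms(1)[OF tau] c2 eta
    finite_measure_pair_measure[OF eta c2]
    finite_measure_pair_measure[OF finite_measure_pair_measure[OF eta c2] subprob_space.axioms(1)[OF tau]]
  show "finite_measure (hyper_measure A \<tau>0 ac bc \<sigma>\<eta>)"
    unfolding hyper_measure_def by (intro finite_measure_pair_measure fin)
  have "emeasure (hyper_measure A \<tau>0 ac bc \<sigma>\<eta>) (space (hyper_measure A \<tau>0 ac bc \<sigma>\<eta>))
      = emeasure (PiM A (\<lambda>_. half_cauchy 1)) (space (PiM A (\<lambda>_. half_cauchy 1)))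
        * (emeasure (half_cauchy \<tau>0) (space (half_cauchy \<tau>0))
        * (emeasure (inv_gamma ac bc) (space (inv_gamma ac bc))
        * emeasure (half_normal \<sigma>\<eta>) (space (half_normal \<sigma>\<eta>))))"
    unfolding hyper_measure_def by (simp only: emeasure_pair_measure_space fin)
  also have "\<dots> \<le> 1 * (1 * (emeasure (inv_gamma ac bc) (space (inv_gamma ac bc)) * 2))"
    by (intro mult_mono subprob_space.subprob_emeasure_le_1 lam tau emeasure_half_normal_le_2) auto
  finally show "emeasure (hyper_measure A \<tau>0 ac bc \<sigma>\<eta>) (space (hyper_measure A \<tau>0 ac bc \<sigma>\<eta>))
      \<le> 2 * emeasure (inv_gamma ac bc) (space (inv_gamma ac bc))"
    by (simp add: mult.commute)
qed

lemma sets_hyper_measure: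
  "sets (hyper_measure A \<tau>0 ac bc \<sigma>\<eta>)
    = sets (PiM A (\<lambda>_. borel) \<Otimes>\<^sub>M (borel \<Otimes>\<^sub>M (borel \<Otimes>\<^sub>M (borel :: real measure))))"
  unfolding hyper_measure_def by (intro sets_pair_measure_cong sets_PiM_cong) auto

lemma space_hyper_measure_not_empty: "space (hyper_measure A \<tau>0 ac bc \<sigma>\<eta>) \<noteq> {}"
  by (simp add: hyper_measure_def space_pair_measure space_PiM PiE_eq_empty_iff
      half_cauchy_def inv_gamma_def half_normal_def)

definition prior_factor ::
  "nat set \<Rightarrow> real \<Rightarrow> (nat \<Rightarrow> real) \<Rightarrow> (nat \<Rightarrow> real) \<times> real \<times> real \<times> real \<Rightarrow> nat \<Rightarrow> real measure" where
  "prior_factor A \<sigma>0 z h j = (case h of (lam, tau, c2, eta) \<Rightarrow>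
     if j \<in> A then density lborel (\<lambda>x. ennreal (normal_density 0 (sqrt (\<sigma>0^2 * kappa2 (z j) (lam j) tau c2 eta)) x))
     else return lborel 0)"

lemma guided_prior_eq_bind:
  "guided_prior p A \<sigma>0 \<tau>0 ac bc \<sigma>\<eta> z
    = hyper_measure A \<tau>0 ac bc \<sigma>\<eta> \<bind> (\<lambda>h. PiM {..<p} (prior_factor A \<sigma>0 z h))"
  unfolding guided_prior_def prior_factor_def by (intro bind_cong) (auto split: prod.split)

lemma subprob_space_prior_factor: "subprob_space (prior_factor A \<sigma>0 z h j)"
  by (auto simp: prior_factor_def subprob_space_normal_density prob_space_imp_subprob_space
      prob_space_return split: prod.split)

lemma sets_prior_factor [measurable_cong, simp]: "sets (prior_factor A \<sigma>0 z h j) = sets borel"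
  by (simp add: prior_factor_def split: prod.split)

lemma measurable_emeasure_prior_factor:
  assumes z: "\<And>j. (\<lambda>x. zf x j) \<in> borel_measurable M"
    and h: "hf \<in> measurable M (hyper_measure A \<tau>0 ac bc \<sigma>\<eta>)"
    and S: "S \<in> sets borel"
  shows "(\<lambda>x. emeasure (prior_factor A \<sigma>0 (zf x) (hf x) j) S) \<in> borel_measurable M"
proof (cases "j \<in> A")
  case False
  then show ?thesis
    by (simp add: prior_factor_def split_beta')
next
  case True
  define sd where "sd x = sqrt (\<sigma>0^2 * kappa2 (zf x j) (fst (hf x) j) (fst (snd (hf x)))
      (fst (snd (snd (hf x)))) (snd (snd (snd (hf x)))))" for x
  have [measurable]: "hf \<in> measurable M (PiM A (\<lambda>_. borel) \<Otimes>\<^sub>M (borel \<Otimes>\<^sub>M (borel \<Otimes>\<^sub>M borel)))"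
    using h by (simp add: measurable_cong_sets[OF refl sets_hyper_measure])
  have [measurable]: "(\<lambda>x. zf x j) \<in> borel_measurable M"
    by (rule z)
  have [measurable]: "sd \<in> borel_measurable M"
    using True unfolding sd_def kappa2_def by measurable
  have "(\<lambda>x. emeasure (prior_factor A \<sigma>0 (zf x) (hf x) j) S)
      = (\<lambda>x. \<integral>\<^sup>+t. ennreal (normal_density 0 (sd x) t) * indicator S t \<partial>lborel)"
    using True S by (auto simp: prior_factor_def sd_def split_beta' emeasure_density nn_integral_set_ennreal)
  also have "\<dots> \<in> borel_measurable M"
    using S unfolding normal_density_def by measurable
  finally show ?thesis .
qed

lemma measurable_prior_kernel:
  assumes z: "\<And>j. (\<lambda>x. zf x j) \<in> borel_measurable M"
    and h: "hf \<in> measurable M (hyper_measure A \<tau>0 ac bc \<sigma>\<eta>)"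
  shows "(\<lambda>x. PiM {..<p} (prior_factor A \<sigma>0 (zf x) (hf x))) \<in> measurable M (subprob_algebra (param_space p))"
proof (rule measurable_subprob_algebra_generated[where \<Omega> = "PiE {..<p} (\<lambda>_. UNIV)"
      and G = "prod_algebra {..<p} (\<lambda>_. lborel)"])
  let ?G = "prod_algebra {..<p} (\<lambda>_. lborel :: real measure)"
  show "sets (param_space p) = sigma_sets (PiE {..<p} (\<lambda>_. UNIV)) ?G"
    by (simp add: param_space_def sets_PiM)
  show "Int_stable ?G"
    by (rule Int_stable_prod_algebra)
  show "?G \<subseteq> Pow (PiE {..<p} (\<lambda>_. UNIV))"
    using prod_algebra_sets_into_space[of "{..<p}" "\<lambda>_. lborel"] by simp
  show "subprob_space (PiM {..<p} (prior_factor A \<sigma>0 (zf x) (hf x)))" for x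
    by (intro subprob_space_PiM subprob_space_prior_factor) simp
  show "sets (PiM {..<p} (prior_factor A \<sigma>0 (zf x) (hf x))) = sets (param_space p)" for x
    unfolding param_space_def by (intro sets_PiM_cong) auto
  have box: "(\<lambda>x. emeasure (PiM {..<p} (prior_factor A \<sigma>0 (zf x) (hf x))) B) \<in> borel_measurable M"
    if "B \<in> ?G" for B
  proof -
    obtain Y where Y: "B = PiE {..<p} Y" "\<And>j. j < p \<Longrightarrow> Y j \<in> sets borel"
      using \<open>B \<in> ?G\<close> unfolding prod_algebra_eq_finite[OF finite_lessThan] by auto
    have "emeasure (PiM {..<p} (prior_factor A \<sigma>0 (zf x) (hf x))) B
        = (\<Prod>j<p. emeasure (prior_factor A \<sigma>0 (zf x) (hf x) j) (Y j))" for x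
    proof -
      interpret product_sigma_finite "prior_factor A \<sigma>0 (zf x) (hf x)"
        unfolding product_sigma_finite_def
        by (auto intro: subprob_space_prior_factor subprob_space.axioms finite_measure.sigma_finite_measure)
      show ?thesis
        unfolding Y(1) using Y(2) by (intro emeasure_PiM) auto
    qed
    then show ?thesis
      using Y(2) by (auto intro!: borel_measurable_prod_ennreal measurable_emeasure_prior_factor[OF z h])
  qed
  then show "B \<in> ?G \<Longrightarrow> (\<lambda>x. emeasure (PiM {..<p} (prior_factor A \<sigma>0 (zf x) (hf x))) B) \<in> borel_measurable M"
    for B .
  show "(\<lambda>x. emeasure (PiM {..<p} (prior_factor A \<sigma>0 (zf x) (hf x))) (PiE {..<p} (\<lambda>_. UNIV)))
      \<in> borel_measurable M"
    by (rule box) (auto simp: prod_algebra_eq_finite)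
qed

lemma measurable_prior_kernel_hyper_measure:
  "(\<lambda>h. PiM {..<p} (prior_factor A \<sigma>0 z h))
    \<in> measurable (hyper_measure A \<tau>0 ac bc \<sigma>\<eta>) (subprob_algebra (param_space p))"
  using measurable_prior_kernel[of "\<lambda>_. z" _ "\<lambda>h. h"] by simp

lemma sets_guided_prior [measurable_cong]:
  "sets (guided_prior p A \<sigma>0 \<tau>0 ac bc \<sigma>\<eta> z) = sets (param_space p)"
  unfolding guided_prior_eq_bind param_space_def
  by (intro sets_bind sets_PiM_cong space_hyper_measure_not_empty) auto

lemma
  assumes "finite A" and "\<tau>0 > 0" "ac > 0" "bc > 0"
  shows finite_measure_guided_prior: "finite_measure (guided_prior p A \<sigma>0 \<tau>0 ac bc \<sigma>\<eta> z)"
    and measure_guided_prior_le: "measure (guided_prior p A \<sigma>0 \<tau>0 ac bc \<sigma>\<eta> z) (space (guided_prior p A \<sigma>0 \<tau>0 ac bc \<sigma>\<eta> z))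
      \<le> 2 * measure (inv_gamma ac bc) (space (inv_gamma ac bc))"
proof -
  let ?H = "hyper_measure A \<tau>0 ac bc \<sigma>\<eta>" and ?\<Pi> = "guided_prior p A \<sigma>0 \<tau>0 ac bc \<sigma>\<eta> z"
  have "emeasure ?\<Pi> (space ?\<Pi>) = (\<integral>\<^sup>+h. emeasure (PiM {..<p} (prior_factor A \<sigma>0 z h)) (space (param_space p)) \<partial>?H)"
    unfolding sets_eq_imp_space_eq[OF sets_guided_prior] unfolding guided_prior_eq_bind
    by (rule emeasure_bind[OF space_hyper_measure_not_empty measurable_prior_kernel_hyper_measure]) simp
  also have "\<dots> \<le> (\<integral>\<^sup>+h. 1 \<partial>?H)"
    by (intro nn_integral_mono subprob_space.subprob_emeasure_le_1 subprob_space_PiM subprob_space_prior_factor) simp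
  also have "\<dots> \<le> 2 * emeasure (inv_gamma ac bc) (space (inv_gamma ac bc))"
    using emeasure_hyper_measure_le[OF assms] by simp
  finally have le: "emeasure ?\<Pi> (space ?\<Pi>) \<le> 2 * emeasure (inv_gamma ac bc) (space (inv_gamma ac bc))" .
  also have "\<dots> < \<infinity>"
    using emeasure_inv_gamma_finite[OF assms(3,4)] by (simp add: ennreal_mult_less_top)
  finally show "finite_measure ?\<Pi>"
    by (intro finite_measureI) simp
  show "measure ?\<Pi> (space ?\<Pi>) \<le> 2 * measure (inv_gamma ac bc) (space (inv_gamma ac bc))"
    using le emeasure_inv_gamma_finite[OF assms(3,4)]
    by (simp add: measure_def enn2real_leI ennreal_mult)
qed

lemma borel_measurable_integral_guided_prior:
  fixes F :: "'a \<Rightarrow> (nat \<Rightarrow> real) \<Rightarrow> real"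
  assumes "finite A" and "\<tau>0 > 0" "ac > 0" "bc > 0"
    and z: "\<And>j. (\<lambda>x. zf x j) \<in> borel_measurable M"
    and F: "(\<lambda>(x, \<beta>). F x \<beta>) \<in> borel_measurable (M \<Otimes>\<^sub>M param_space p)"
    and F_nonneg: "\<And>x \<beta>. 0 \<le> F x \<beta>"
  shows "(\<lambda>x. \<integral>\<beta>. F x \<beta> \<partial>guided_prior p A \<sigma>0 \<tau>0 ac bc \<sigma>\<eta> (zf x)) \<in> borel_measurable M"
proof -
  let ?H = "hyper_measure A \<tau>0 ac bc \<sigma>\<eta>"
  let ?K = "\<lambda>x h. PiM {..<p} (prior_factor A \<sigma>0 (zf x) h)"
  interpret H: finite_measure ?H
    using assms(1-4) by (rule finite_measure_hyper_measure)
  have F_x: "F x \<in> borel_measurable (param_space p)" if "x \<in> space M" for x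
    using measurable_Pair2[OF F that] by simp
  have "(\<lambda>x. \<integral>\<^sup>+h. \<integral>\<^sup>+\<beta>. ennreal (F x \<beta>) \<partial>?K x h \<partial>?H) \<in> borel_measurable M"
  proof (rule H.borel_measurable_nn_integral)
    have "(\<lambda>q. ?K (fst q) (snd q)) \<in> measurable (M \<Otimes>\<^sub>M ?H) (subprob_algebra (param_space p))"
      by (rule measurable_prior_kernel) (use z in measurable)
    then have "(\<lambda>q. \<integral>\<^sup>+\<beta>. ennreal (F (fst q) \<beta>) \<partial>?K (fst q) (snd q)) \<in> borel_measurable (M \<Otimes>\<^sub>M ?H)"
      by (rule nn_integral_measurable_subprob_algebra2[rotated]) (use F in measurable)
    then show "(\<lambda>(x, h). \<integral>\<^sup>+\<beta>. ennreal (F x \<beta>) \<partial>?K x h) \<in> borel_measurable (M \<Otimes>\<^sub>M ?H)"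
      by (simp add: split_beta')
  qed
  moreover have "(\<integral>\<beta>. F x \<beta> \<partial>guided_prior p A \<sigma>0 \<tau>0 ac bc \<sigma>\<eta> (zf x))
      = enn2real (\<integral>\<^sup>+h. \<integral>\<^sup>+\<beta>. ennreal (F x \<beta>) \<partial>?K x h \<partial>?H)" if "x \<in> space M" for x
  proof -
    have "(\<integral>\<beta>. F x \<beta> \<partial>guided_prior p A \<sigma>0 \<tau>0 ac bc \<sigma>\<eta> (zf x))
        = enn2real (\<integral>\<^sup>+\<beta>. ennreal (F x \<beta>) \<partial>guided_prior p A \<sigma>0 \<tau>0 ac bc \<sigma>\<eta> (zf x))"
      using F_x[OF that] F_nonneg
      by (intro integral_eq_nn_integral) (auto simp: measurable_cong_sets[OF sets_guided_prior refl])
    also have "(\<integral>\<^sup>+\<beta>. ennreal (F x \<beta>) \<partial>guided_prior p A \<sigma>0 \<tau>0 ac bc \<sigma>\<eta> (zf x))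
        = (\<integral>\<^sup>+h. \<integral>\<^sup>+\<beta>. ennreal (F x \<beta>) \<partial>?K x h \<partial>?H)"
      unfolding guided_prior_eq_bind using F_x[OF that]
      by (intro nn_integral_bind[OF _ measurable_prior_kernel_hyper_measure]) simp
    finally show ?thesis .
  qed
  ultimately show ?thesis
    by (subst measurable_cong) auto
qed

section \<open>The Gaussian likelihood\<close>

lemma lik_nonneg: "0 \<le> lik n p X \<sigma> \<beta> y"
  unfolding lik_def by (intro prod_nonneg) (auto simp: normal_density_nonneg)

lemma lik_pos: "\<sigma> > 0 \<Longrightarrow> 0 < lik n p X \<sigma> \<beta> y"
  unfolding lik_def by (intro prod_pos) (auto intro: normal_density_pos)

lemma measurable_lik_pair:
  "(\<lambda>(\<beta>, y). lik n p X \<sigma> \<beta> y) \<in> borel_measurable (param_space p \<Otimes>\<^sub>M param_space n)"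
  unfolding lik_def lin_pred_def normal_density_def param_space_def split_beta' by measurable

lemma measurable_lik [measurable (raw)]:
  assumes "f \<in> M \<rightarrow>\<^sub>M param_space p" and "g \<in> M \<rightarrow>\<^sub>M param_space n"
  shows "(\<lambda>x. lik n p X \<sigma> (f x) (g x)) \<in> borel_measurable M"
  using measurable_compose[OF measurable_Pair[OF assms] measurable_lik_pair] by simp

lemma measurable_lik_data [measurable]: "lik n p X \<sigma> \<beta> \<in> borel_measurable (param_space n)"
  unfolding lik_def lin_pred_def normal_density_def param_space_def by measurable

lemma sets_data_measure [measurable_cong]: "sets (data_measure n p X \<sigma> \<beta>) = sets (param_space n)"
  unfolding data_measure_def param_space_def by (intro sets_PiM_cong) auto

lemma space_data_measure: "space (data_measure n p X \<sigma> \<beta>) = space (param_space n)"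
  using sets_data_measure by (rule sets_eq_imp_space_eq)

lemma prob_space_data_measure: "\<sigma> > 0 \<Longrightarrow> prob_space (data_measure n p X \<sigma> \<beta>)"
  unfolding data_measure_def by (intro prob_space_PiM prob_space_normal_density)

lemma sigma_finite_param_space: "sigma_finite_measure (param_space n)"
  unfolding param_space_def
  by (intro product_sigma_finite.sigma_finite) (auto simp: product_sigma_finite_def lborel.sigma_finite_measure_axioms)

lemma indicator_PiE_eq_prod:
  assumes "x \<in> PiE I (\<lambda>_. UNIV)" and "finite I"
  shows "(indicator (PiE I A) x :: ennreal) = (\<Prod>i\<in>I. indicator (A i) (x i))"
proof (cases "x \<in> PiE I A")
  case False
  then obtain i where "i \<in> I" "x i \<notin> A i"
    using assms(1) by (auto simp: PiE_iff)
  with assms(2) have "(\<Prod>i\<in>I. indicator (A i) (x i) :: ennreal) = 0"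
    by (subst prod.remove) auto
  with False show ?thesis
    by simp
qed (auto simp: indicator_def PiE_iff)

lemma data_measure_eq_density:
  assumes \<sigma>: "\<sigma> > 0"
  shows "data_measure n p X \<sigma> \<beta> = density (param_space n) (\<lambda>y. ennreal (lik n p X \<sigma> \<beta> y))"
proof -
  let ?f = "\<lambda>i x. ennreal (normal_density (lin_pred X p \<beta> i) \<sigma> x)"
  interpret product_sigma_finite "\<lambda>i. density lborel (?f i)"
    unfolding product_sigma_finite_def
    using prob_space_normal_density[OF \<sigma>] prob_space_imp_sigma_finite by blast
  interpret lborel: product_sigma_finite "\<lambda>_. lborel :: real measure"
    by (simp add: product_sigma_finite_def lborel.sigma_finite_measure_axioms)
  have "density (param_space n) (\<lambda>y. ennreal (lik n p X \<sigma> \<beta> y)) = PiM {..<n} (\<lambda>i. density lborel (?f i))"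
  proof (rule PiM_eqI)
    fix B assume B: "\<And>i. i \<in> {..<n} \<Longrightarrow> B i \<in> sets (density lborel (?f i))"
    have "emeasure (density (param_space n) (\<lambda>y. ennreal (lik n p X \<sigma> \<beta> y))) (PiE {..<n} B)
        = (\<integral>\<^sup>+y. (\<Prod>i<n. ?f i (y i) * indicator (B i) (y i)) \<partial>param_space n)"
      using B unfolding param_space_def
      by (subst emeasure_density)
         (auto intro!: sets_PiM_I_finite nn_integral_cong
           simp: lik_def indicator_PiE_eq_prod space_PiM prod.distrib prod_ennreal normal_density_nonneg)
    also have "\<dots> = (\<Prod>i<n. \<integral>\<^sup>+x. ?f i x * indicator (B i) x \<partial>lborel)"
      unfolding param_space_def using B
      by (intro lborel.product_nn_integral_prod[where f = "\<lambda>i x. ?f i x * indicator (B i) x", simplified]) auto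
    also have "\<dots> = (\<Prod>i<n. emeasure (density lborel (?f i)) (B i))"
      using B by (intro prod.cong refl) (simp add: emeasure_density nn_integral_set_ennreal mult.commute)
    finally show "emeasure (density (param_space n) (\<lambda>y. ennreal (lik n p X \<sigma> \<beta> y))) (PiE {..<n} B)
        = (\<Prod>i\<in>{..<n}. emeasure (density lborel (?f i)) (B i))"
      by simp
  qed (auto simp: param_space_def intro!: sets_PiM_cong)
  then show ?thesis
    unfolding data_measure_def by simp
qed

lemma Theta_eq_PiE: "Theta p A = PiE {..<p} (\<lambda>j. if j \<in> A then UNIV else {0 :: real})"
proof (intro set_eqI iffI)
  fix \<beta> assume "\<beta> \<in> Theta p A"
  then have "\<beta> \<in> extensional {..<p}" and "\<forall>j<p. j \<notin> A \<longrightarrow> \<beta> j = 0"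
    unfolding Theta_def by (auto simp: PiE_iff)
  then show "\<beta> \<in> PiE {..<p} (\<lambda>j. if j \<in> A then UNIV else {0})"
    unfolding PiE_iff by simp
next
  fix \<beta> assume "\<beta> \<in> PiE {..<p} (\<lambda>j. if j \<in> A then UNIV else {0 :: real})"
  then have "\<beta> \<in> extensional {..<p}" and "\<forall>j<p. j \<notin> A \<longrightarrow> \<beta> j = 0"
    unfolding PiE_iff by (auto split: if_splits)
  then show "\<beta> \<in> Theta p A"
    unfolding Theta_def PiE_iff by simp
qed

lemma sets_Theta [measurable]: "Theta p A \<in> sets (param_space p)"
  unfolding Theta_eq_PiE param_space_def by (intro sets_PiM_I_finite) auto

lemma sets_l2dist_ge_Int_Theta [measurable]:
  "{\<beta>. r \<le> l2dist p \<beta> b0} \<inter> Theta p A \<in> sets (param_space p)"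
proof -
  have "{\<beta> \<in> space (param_space p). r \<le> l2dist p \<beta> b0} \<in> sets (param_space p)"
    unfolding l2dist_def param_space_def by measurable
  then have "{\<beta> \<in> space (param_space p). r \<le> l2dist p \<beta> b0} \<inter> Theta p A \<in> sets (param_space p)"
    using sets_Theta by (rule sets.Int)
  moreover have "{\<beta>. r \<le> l2dist p \<beta> b0} \<inter> Theta p A
      = {\<beta> \<in> space (param_space p). r \<le> l2dist p \<beta> b0} \<inter> Theta p A"
    using sets.sets_into_space[OF sets_Theta] by blast
  ultimately show ?thesis
    by simp
qed

section \<open>The active posterior\<close>

lemma active_posterior_tail_bound:
  fixes n p :: nat and X :: "nat \<Rightarrow> nat \<Rightarrow> real" and \<sigma>0 :: real and \<phi> :: "(nat \<Rightarrow> real) \<Rightarrow> real"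
  defines "Pb \<equiv> data_measure n p X \<sigma>0"
  assumes \<sigma>0: "\<sigma>0 > 0" and A: "finite A" and hyper: "\<tau>0 > 0" "ac > 0" "bc > 0"
    and B: "B \<inter> Theta p A \<in> sets (param_space p)"
    and \<phi>: "\<phi> \<in> borel_measurable (param_space n)" "\<And>y. 0 \<le> \<phi> y \<and> \<phi> y \<le> 1"
    and tail: "\<And>\<beta>. \<beta> \<in> B \<inter> Theta p A \<Longrightarrow> (\<integral>y. 1 - \<phi> y \<partial>Pb \<beta>) \<le> \<tau>" and \<tau>: "0 \<le> \<tau>"
    and \<Omega>: "\<Omega> \<in> sets (param_space n)"
    and evidence: "\<And>y. y \<in> \<Omega> \<Longrightarrow>
      ex \<le> (\<integral>\<beta>. indicator (Theta p A) \<beta> * (lik n p X \<sigma>0 \<beta> y / lik n p X \<sigma>0 b0 y) \<partial>guided_prior p A \<sigma>0 \<tau>0 ac bc \<sigma>\<eta> z)"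
    and ex: "0 < ex" and \<epsilon>: "0 < \<epsilon>"
  shows "measure (Pb b0) {y \<in> space (param_space n). \<epsilon> < active_posterior n p X \<sigma>0 (guided_prior p A \<sigma>0 \<tau>0 ac bc \<sigma>\<eta> z) A y B}
    \<le> measure (Pb b0) (space (param_space n) - \<Omega>) + 2 * (\<integral>y. \<phi> y \<partial>Pb b0)
      + 2 * \<tau> * (2 * measure (inv_gamma ac bc) (space (inv_gamma ac bc))) / (\<epsilon> * ex)"
proof -
  let ?prior = "guided_prior p A \<sigma>0 \<tau>0 ac bc \<sigma>\<eta> z"
  have Pb_eq: "Pb = (\<lambda>\<beta>. density (param_space n) (\<lambda>y. ennreal (lik n p X \<sigma>0 \<beta> y)))"
    unfolding Pb_def using data_measure_eq_density[OF \<sigma>0] by blast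
  have "measure (Pb b0) {y \<in> space (param_space n). \<epsilon> < active_posterior n p X \<sigma>0 ?prior A y B}
      \<le> measure (Pb b0) (space (param_space n) - \<Omega>) + 2 * (\<integral>y. \<phi> y \<partial>Pb b0)
        + 2 * \<tau> * measure ?prior (space ?prior) / (\<epsilon> * ex)"
    unfolding active_posterior_def Pb_eq
  proof (rule posterior_tail_bound)
    show "finite_measure ?prior"
      using A hyper by (rule finite_measure_guided_prior)
    show "(\<lambda>(\<beta>, y). lik n p X \<sigma>0 \<beta> y) \<in> borel_measurable (?prior \<Otimes>\<^sub>M param_space n)"
      unfolding measurable_cong_sets[OF sets_pair_measure_cong[OF sets_guided_prior refl] refl]
      by measurable
    show "prob_space (density (param_space n) (\<lambda>y. ennreal (lik n p X \<sigma>0 \<beta> y)))" for \<beta>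
      using prob_space_data_measure[OF \<sigma>0, of n p X \<beta>] by (simp add: data_measure_eq_density[OF \<sigma>0])
  qed (use \<sigma>0 sigma_finite_param_space lik_nonneg lik_pos B \<phi> \<tau> \<Omega> ex \<epsilon> evidence tail
      in \<open>auto simp: Pb_eq sets_guided_prior\<close>)
  also have "\<dots> \<le> measure (Pb b0) (space (param_space n) - \<Omega>) + 2 * (\<integral>y. \<phi> y \<partial>Pb b0)
      + 2 * \<tau> * (2 * measure (inv_gamma ac bc) (space (inv_gamma ac bc))) / (\<epsilon> * ex)"
    using measure_guided_prior_le[OF A hyper] \<tau> \<epsilon> ex
    by (intro add_left_mono divide_right_mono mult_left_mono) auto
  finally show ?thesis .
qed

lemma borel_measurable_active_posterior:
  fixes Q :: "'w measure"
  assumes "finite A" and hyper: "\<tau>0 > 0" "ac > 0" "bc > 0"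
    and z: "\<And>j. (\<lambda>\<omega>. z \<omega> j) \<in> borel_measurable Q"
    and B: "B \<inter> Theta p A \<in> sets (param_space p)"
  shows "(\<lambda>(\<omega>, y). active_posterior n p X \<sigma>0 (guided_prior p A \<sigma>0 \<tau>0 ac bc \<sigma>\<eta> (z \<omega>)) A y B)
    \<in> borel_measurable (Q \<Otimes>\<^sub>M param_space n)"
proof -
  have z': "\<And>j. (\<lambda>x. z (fst x) j) \<in> borel_measurable (Q \<Otimes>\<^sub>M param_space n)"
    using z by measurable
  have "(\<lambda>x. \<integral>\<beta>. indicator C \<beta> * lik n p X \<sigma>0 \<beta> (snd x) \<partial>guided_prior p A \<sigma>0 \<tau>0 ac bc \<sigma>\<eta> (z (fst x)))
      \<in> borel_measurable (Q \<Otimes>\<^sub>M param_space n)" if C[measurable]: "C \<in> sets (param_space p)" for C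
    by (intro borel_measurable_integral_guided_prior[OF assms(1) hyper z']) (measurable, simp add: lik_nonneg)
  from this[OF B] this[OF sets_Theta] show ?thesis
    unfolding active_posterior_def split_beta' by measurable
qed

lemma sets_active_posterior_gt:
  fixes Q :: "'w measure"
  assumes hyper: "\<tau>0 > 0" "ac > 0" "bc > 0"
    and z: "\<And>j. (\<lambda>\<omega>. z \<omega> j) \<in> borel_measurable Q"
    and An: "\<And>A. {\<omega> \<in> space Q. An \<omega> = A} \<in> sets Q" "\<And>\<omega>. \<omega> \<in> space Q \<Longrightarrow> An \<omega> \<subseteq> {..<p}"
    and B: "\<And>A. B \<inter> Theta p A \<in> sets (param_space p)"
  shows "{(\<omega>, y) \<in> space (Q \<Otimes>\<^sub>M data_measure n p X \<sigma>0 b0).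
      \<epsilon> < active_posterior n p X \<sigma>0 (guided_prior p (An \<omega>) \<sigma>0 \<tau>0 ac bc \<sigma>\<eta> (z \<omega>)) (An \<omega>) y B}
    \<in> sets (Q \<Otimes>\<^sub>M data_measure n p X \<sigma>0 b0)"
proof -
  let ?post = "\<lambda>A \<omega> y. active_posterior n p X \<sigma>0 (guided_prior p A \<sigma>0 \<tau>0 ac bc \<sigma>\<eta> (z \<omega>)) A y B"
  have sets_eq: "sets (Q \<Otimes>\<^sub>M data_measure n p X \<sigma>0 b0) = sets (Q \<Otimes>\<^sub>M param_space n)"
    by (rule sets_pair_measure_cong[OF refl sets_data_measure])
  have "{(\<omega>, y) \<in> space (Q \<Otimes>\<^sub>M data_measure n p X \<sigma>0 b0). \<epsilon> < ?post (An \<omega>) \<omega> y}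
      = (\<Union>A\<in>Pow {..<p}. {x \<in> space (Q \<Otimes>\<^sub>M param_space n). An (fst x) = A}
          \<inter> {x \<in> space (Q \<Otimes>\<^sub>M param_space n). \<epsilon> < (\<lambda>(\<omega>, y). ?post A \<omega> y) x})"
    using An(2) sets_eq_imp_space_eq[OF sets_eq] by (auto simp: space_pair_measure)
  also have "\<dots> \<in> sets (Q \<Otimes>\<^sub>M param_space n)"
  proof (intro sets.finite_UN sets.Int)
    fix A assume "A \<in> Pow {..<p}"
    then have "finite A"
      by (auto intro: finite_subset)
    note [measurable] = borel_measurable_active_posterior[OF this hyper z B]
    show "{x \<in> space (Q \<Otimes>\<^sub>M param_space n). \<epsilon> < (\<lambda>(\<omega>, y). ?post A \<omega> y) x} \<in> sets (Q \<Otimes>\<^sub>M param_space n)"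
      by measurable
    have "{x \<in> space (Q \<Otimes>\<^sub>M param_space n). An (fst x) = A} = fst -` {\<omega> \<in> space Q. An \<omega> = A} \<inter> space (Q \<Otimes>\<^sub>M param_space n)"
      by (auto simp: space_pair_measure)
    then show "{x \<in> space (Q \<Otimes>\<^sub>M param_space n). An (fst x) = A} \<in> sets (Q \<Otimes>\<^sub>M param_space n)"
      using measurable_sets[OF measurable_fst An(1)] by simp
  qed auto
  finally show ?thesis
    unfolding sets_eq .
qed

lemma active_sets_subset_Pow: "active_sets p S0 m \<subseteq> Pow {..<p}"
  by (auto simp: active_sets_def)

lemma measure_active_set_admissible_tendsto_1:
  fixes Q :: "'w measure" and An :: "nat \<Rightarrow> 'w \<Rightarrow> nat set" and bhat :: "nat \<Rightarrow> 'w \<Rightarrow> nat \<Rightarrow> real"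
    and p :: "nat \<Rightarrow> nat" and t r m :: "nat \<Rightarrow> real"
  assumes Q: "prob_space Q"
    and bhat: "\<And>n j. (\<lambda>\<omega>. bhat n \<omega> j) \<in> borel_measurable Q"
    and An: "\<And>n A. {\<omega> \<in> space Q. An n \<omega> = A} \<in> sets Q" "\<And>n \<omega>. \<omega> \<in> space Q \<Longrightarrow> An n \<omega> \<subseteq> {..<p n}"
    and S0: "\<And>n. S0 n \<subseteq> {..<p n}"
    and screening: "\<And>n \<omega>. \<omega> \<in> space Q \<Longrightarrow> {j. j < p n \<and> t n < \<bar>bhat n \<omega> j\<bar>} \<subseteq> An n \<omega>"
    and r: "\<And>n. t n < r n"
    and support_detected: "(\<lambda>n. measure Q {\<omega> \<in> space Q. \<forall>j \<in> S0 n. r n \<le> \<bar>bhat n \<omega> j\<bar>}) \<longlonglongrightarrow> 1"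
    and size: "(\<lambda>n. measure Q {\<omega> \<in> space Q. real (card (An n \<omega>)) \<le> m n}) \<longlonglongrightarrow> 1"
  shows "(\<lambda>n. measure Q {\<omega> \<in> space Q. An n \<omega> \<in> active_sets (p n) (S0 n) (m n)}) \<longlonglongrightarrow> 1"
proof -
  interpret Q: prob_space Q
    by (rule Q)
  define D where "D n = {\<omega> \<in> space Q. \<forall>j \<in> S0 n. r n \<le> \<bar>bhat n \<omega> j\<bar>}" for n
  define Z where "Z n = {\<omega> \<in> space Q. real (card (An n \<omega>)) \<le> m n}" for n
  define G where "G n = {\<omega> \<in> space Q. An n \<omega> \<in> active_sets (p n) (S0 n) (m n)}" for n
  have D_sets: "D n \<in> sets Q" for n
  proof -
    have [measurable]: "(\<lambda>\<omega>. bhat n \<omega> j) \<in> borel_measurable Q" for j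
      by (rule bhat)
    have "{\<omega> \<in> space Q. r n \<le> \<bar>bhat n \<omega> j\<bar>} \<in> sets Q" for j
      by measurable
    moreover have "finite (S0 n)"
      using S0 by (rule finite_subset) simp
    ultimately show ?thesis
      unfolding D_def by (intro sets.sets_Collect_finite_All)
  qed
  have Z_sets: "Z n \<in> sets Q" for n
    unfolding Z_def by (rule sets_level_set_finite_range[of Q "An n" "p n"]) (use An in auto)
  have G_sets: "G n \<in> sets Q" for n
    unfolding G_def by (rule sets_level_set_finite_range[of Q "An n" "p n"]) (use An in auto)
  have DZ_G: "D n \<inter> Z n \<subseteq> G n" for n
  proof
    fix \<omega> assume \<omega>: "\<omega> \<in> D n \<inter> Z n"
    then have "S0 n \<subseteq> An n \<omega>"
      using S0 screening[of \<omega> n] r[of n] by (fastforce simp: D_def)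
    with \<omega> An(2)[of \<omega> n] show "\<omega> \<in> G n"
      by (auto simp: G_def Z_def D_def active_sets_def)
  qed
  have lower: "measure Q (D n) + measure Q (Z n) - 1 \<le> measure Q (G n)" for n
    using Q.prob_Int_ge[OF D_sets[of n] Z_sets[of n]] Q.finite_measure_mono[OF DZ_G[of n] G_sets[of n]] by linarith
  have "(\<lambda>n. measure Q (D n) + measure Q (Z n) - 1) \<longlonglongrightarrow> 1 + 1 - 1"
    using support_detected size unfolding D_def Z_def by (intro tendsto_intros)
  then have lim: "(\<lambda>n. measure Q (D n) + measure Q (Z n) - 1) \<longlonglongrightarrow> 1"
    by simp
  show ?thesis
    unfolding G_def[symmetric]
    by (rule tendsto_sandwich[OF always_eventually[OF allI[OF lower]] _ lim tendsto_const]) (simp add: Q.prob_le_1)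
qed

lemma measure_active_posterior_gt_tendsto_0:
  fixes A :: "nat \<Rightarrow> nat set" and \<A> :: "nat \<Rightarrow> nat set set" and z :: "nat \<Rightarrow> nat \<Rightarrow> real"
    and \<phi> :: "nat \<Rightarrow> (nat \<Rightarrow> real) \<Rightarrow> real" and \<Omega> :: "nat \<Rightarrow> nat set \<Rightarrow> (nat \<Rightarrow> real) set"
    and p :: "nat \<Rightarrow> nat" and X :: "nat \<Rightarrow> nat \<Rightarrow> nat \<Rightarrow> real" and \<beta>0 :: "nat \<Rightarrow> nat \<Rightarrow> real"
    and eps :: "nat \<Rightarrow> real" and \<sigma>0 M a b \<epsilon> :: real
  defines "P0 n \<equiv> data_measure n (p n) (X n) \<sigma>0 (\<beta>0 n)"
  assumes \<sigma>0: "\<sigma>0 > 0" and hyper: "\<tau>0 > 0" "ac > 0" "bc > 0" and \<A>: "\<And>n. \<A> n \<subseteq> Pow {..<p n}"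
    and \<phi>: "\<And>n. \<phi> n \<in> borel_measurable (param_space n)" "\<And>n y. 0 \<le> \<phi> n y \<and> \<phi> n y \<le> 1"
    and type_I: "(\<lambda>n. \<integral>y. \<phi> n y \<partial>P0 n) \<longlonglongrightarrow> 0"
    and type_II: "\<forall>\<^sub>F n in sequentially. \<forall>A' \<in> \<A> n. \<forall>\<beta> \<in> Theta (p n) A'.
       M * eps n \<le> l2dist (p n) \<beta> (\<beta>0 n) \<longrightarrow>
       (\<integral>y. 1 - \<phi> n y \<partial>data_measure n (p n) (X n) \<sigma>0 \<beta>) \<le> exp (- b * real n * (eps n)^2)"
    and \<Omega>: "\<And>n A'. \<Omega> n A' \<in> sets (param_space n)"
      "\<And>e. e > 0 \<Longrightarrow> \<forall>\<^sub>F n in sequentially. \<forall>A' \<in> \<A> n. measure (P0 n) (space (P0 n) - \<Omega> n A') < e"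
    and evidence: "\<And>n A' y. A' \<in> \<A> n \<Longrightarrow> y \<in> \<Omega> n A' \<Longrightarrow>
       exp (- a * real n * (eps n)^2) \<le> (\<integral>\<beta>. indicator (Theta (p n) A') \<beta> *
         (lik n (p n) (X n) \<sigma>0 \<beta> y / lik n (p n) (X n) \<sigma>0 (\<beta>0 n) y) \<partial>guided_prior (p n) A' \<sigma>0 \<tau>0 ac bc \<sigma>\<eta> (z n))"
    and ab: "a < b" and rate: "filterlim (\<lambda>n. real n * (eps n)^2) at_top sequentially"
    and \<epsilon>: "\<epsilon> > 0"
  shows "(\<lambda>n. if A n \<in> \<A> n then measure (P0 n) {y \<in> space (param_space n).
      \<epsilon> < active_posterior n (p n) (X n) \<sigma>0 (guided_prior (p n) (A n) \<sigma>0 \<tau>0 ac bc \<sigma>\<eta> (z n)) (A n) y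
        {\<beta>. M * eps n \<le> l2dist (p n) \<beta> (\<beta>0 n)}} else 0) \<longlonglongrightarrow> 0"
    (is "?f \<longlonglongrightarrow> 0")
proof (rule order_tendstoI)
  show "\<forall>\<^sub>F n in sequentially. c < ?f n" if "c < 0" for c
    using that by (intro always_eventually) (auto intro: less_le_trans[OF _ measure_nonneg])
  show "\<forall>\<^sub>F n in sequentially. ?f n < e" if e: "0 < e" for e
  proof -
    define H where "H = 2 * measure (inv_gamma ac bc) (space (inv_gamma ac bc))"
    define rest where "rest n = 2 * exp (- b * real n * (eps n)^2) * H / (\<epsilon> * exp (- a * real n * (eps n)^2))" for n
    have "(\<lambda>n. 2 * H / \<epsilon> * (exp (- b * (real n * (eps n)^2)) / exp (- a * (real n * (eps n)^2))))
        \<longlonglongrightarrow> 2 * H / \<epsilon> * 0"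
      by (intro tendsto_mult tendsto_const exp_ratio_tendsto_0 ab rate)
    moreover have "rest = (\<lambda>n. 2 * H / \<epsilon> * (exp (- b * (real n * (eps n)^2)) / exp (- a * (real n * (eps n)^2))))"
      using \<epsilon> by (simp add: rest_def fun_eq_iff field_simps)
    ultimately have "rest \<longlonglongrightarrow> 0"
      by simp
    then have "\<forall>\<^sub>F n in sequentially. rest n < e / 3"
      using e by (intro order_tendstoD) auto
    moreover have "\<forall>\<^sub>F n in sequentially. (\<integral>y. \<phi> n y \<partial>P0 n) < e / 6"
      using order_tendstoD(2)[OF type_I, of "e / 6"] e by simp
    moreover have "\<forall>\<^sub>F n in sequentially. \<forall>A' \<in> \<A> n. measure (P0 n) (space (P0 n) - \<Omega> n A') < e / 3"
      using e by (intro \<Omega>(2)) auto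
    ultimately show ?thesis
      using type_II
    proof eventually_elim
      case (elim n)
      show ?case
      proof (cases "A n \<in> \<A> n")
        case True
        have "finite (A n)"
          using \<A> True by (auto intro: finite_subset)
        then have "measure (P0 n) {y \<in> space (param_space n).
            \<epsilon> < active_posterior n (p n) (X n) \<sigma>0 (guided_prior (p n) (A n) \<sigma>0 \<tau>0 ac bc \<sigma>\<eta> (z n)) (A n) y
              {\<beta>. M * eps n \<le> l2dist (p n) \<beta> (\<beta>0 n)}}
          \<le> measure (P0 n) (space (param_space n) - \<Omega> n (A n)) + 2 * (\<integral>y. \<phi> n y \<partial>P0 n) + rest n"
          unfolding P0_def H_def rest_def using elim(4) True evidence[OF True] \<epsilon>
          by (intro active_posterior_tail_bound[OF \<sigma>0 _ hyper sets_l2dist_ge_Int_Theta \<phi> _ _ \<Omega>(1)]) auto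
        moreover have "measure (P0 n) (space (param_space n) - \<Omega> n (A n)) < e / 3"
          using elim(3) True by (simp add: P0_def space_data_measure)
        ultimately show ?thesis
          using True elim(1,2) by simp
      qed (use e in simp)
    qed
  qed
qed

lemma guided_posterior_contraction:
  fixes Q :: "'w measure" and p :: "nat \<Rightarrow> nat" and X :: "nat \<Rightarrow> nat \<Rightarrow> nat \<Rightarrow> real"
    and \<beta>0 :: "nat \<Rightarrow> nat \<Rightarrow> real" and z :: "nat \<Rightarrow> 'w \<Rightarrow> nat \<Rightarrow> real" and An :: "nat \<Rightarrow> 'w \<Rightarrow> nat set"
    and \<A> :: "nat \<Rightarrow> nat set set" and eps :: "nat \<Rightarrow> real" and \<sigma>0 M a b :: real
  assumes Q: "prob_space Q" and \<sigma>0: "\<sigma>0 > 0" and hyper: "\<tau>0 > 0" "ac > 0" "bc > 0"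
    and z: "\<And>n j. (\<lambda>\<omega>. z n \<omega> j) \<in> borel_measurable Q"
    and An: "\<And>n A. {\<omega> \<in> space Q. An n \<omega> = A} \<in> sets Q" "\<And>n \<omega>. \<omega> \<in> space Q \<Longrightarrow> An n \<omega> \<subseteq> {..<p n}"
    and \<A>: "\<And>n. \<A> n \<subseteq> Pow {..<p n}"
    and admissible: "(\<lambda>n. measure Q {\<omega> \<in> space Q. An n \<omega> \<in> \<A> n}) \<longlonglongrightarrow> 1"
    and tests: "\<exists>\<phi> :: nat \<Rightarrow> (nat \<Rightarrow> real) \<Rightarrow> real.
       (\<forall>n. \<phi> n \<in> borel_measurable (data_measure n (p n) (X n) \<sigma>0 (\<beta>0 n)) \<and> (\<forall>y. 0 \<le> \<phi> n y \<and> \<phi> n y \<le> 1)) \<and>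
       (\<lambda>n. \<integral>y. \<phi> n y \<partial>(data_measure n (p n) (X n) \<sigma>0 (\<beta>0 n))) \<longlonglongrightarrow> 0 \<and>
       (\<forall>\<^sub>F n in sequentially. \<forall>A \<in> \<A> n. \<forall>\<beta> \<in> Theta (p n) A.
          l2dist (p n) \<beta> (\<beta>0 n) \<ge> M * eps n \<longrightarrow>
          (\<integral>y. 1 - \<phi> n y \<partial>(data_measure n (p n) (X n) \<sigma>0 \<beta>)) \<le> exp (- b * real n * (eps n)^2))"
    and evidence: "\<And>\<delta>. \<delta> > 0 \<Longrightarrow> \<exists>\<Omega> :: nat \<Rightarrow> 'w \<Rightarrow> nat set \<Rightarrow> (nat \<Rightarrow> real) set.
         (\<forall>n \<omega> A. \<Omega> n \<omega> A \<in> sets (data_measure n (p n) (X n) \<sigma>0 (\<beta>0 n))) \<and>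
         (\<forall>\<omega> \<in> space Q. \<forall>e > 0. \<forall>\<^sub>F n in sequentially. \<forall>A \<in> \<A> n.
            measure (data_measure n (p n) (X n) \<sigma>0 (\<beta>0 n)) (space (data_measure n (p n) (X n) \<sigma>0 (\<beta>0 n)) - \<Omega> n \<omega> A) < e) \<and>
         (\<forall>n. \<forall>\<omega> \<in> space Q. \<forall>A \<in> \<A> n. \<forall>y \<in> \<Omega> n \<omega> A.
            (\<integral>\<beta>. indicator (Theta (p n) A) \<beta> *
                 (lik n (p n) (X n) \<sigma>0 \<beta> y / lik n (p n) (X n) \<sigma>0 (\<beta>0 n) y) \<partial>(guided_prior (p n) A \<sigma>0 \<tau>0 ac bc \<sigma>\<eta> (z n \<omega>)))
              \<ge> exp (- (a + \<delta>) * real n * (eps n)^2))"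
    and ab: "a < b" and rate: "filterlim (\<lambda>n. real n * (eps n)^2) at_top sequentially"
  shows "\<forall>\<epsilon> > 0. \<forall>e > 0. \<forall>\<^sub>F n in sequentially.
     \<exists>E \<in> sets (Q \<Otimes>\<^sub>M data_measure n (p n) (X n) \<sigma>0 (\<beta>0 n)).
       {(\<omega>, y) \<in> space (Q \<Otimes>\<^sub>M data_measure n (p n) (X n) \<sigma>0 (\<beta>0 n)).
          active_posterior n (p n) (X n) \<sigma>0 (guided_prior (p n) (An n \<omega>) \<sigma>0 \<tau>0 ac bc \<sigma>\<eta> (z n \<omega>)) (An n \<omega>) y
            {\<beta>. l2dist (p n) \<beta> (\<beta>0 n) \<ge> M * eps n} > \<epsilon>} \<subseteq> E
       \<and> measure (Q \<Otimes>\<^sub>M data_measure n (p n) (X n) \<sigma>0 (\<beta>0 n)) E < e"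
    (is "\<forall>\<epsilon> > 0. \<forall>e > 0. ?small \<epsilon> e")
proof (intro allI impI)
  fix \<epsilon> e :: real
  assume \<epsilon>: "\<epsilon> > 0" and e: "e > 0"
  define P0 where "P0 n = data_measure n (p n) (X n) \<sigma>0 (\<beta>0 n)" for n
  define Bad where "Bad n = {(\<omega>, y) \<in> space (Q \<Otimes>\<^sub>M P0 n).
    \<epsilon> < active_posterior n (p n) (X n) \<sigma>0 (guided_prior (p n) (An n \<omega>) \<sigma>0 \<tau>0 ac bc \<sigma>\<eta> (z n \<omega>)) (An n \<omega>) y
      {\<beta>. M * eps n \<le> l2dist (p n) \<beta> (\<beta>0 n)}}" for n
  define G where "G n = {\<omega> \<in> space Q. An n \<omega> \<in> \<A> n}" for n
  obtain \<phi> :: "nat \<Rightarrow> (nat \<Rightarrow> real) \<Rightarrow> real"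
    where \<phi>: "\<And>n. \<phi> n \<in> borel_measurable (param_space n)" "\<And>n y. 0 \<le> \<phi> n y \<and> \<phi> n y \<le> 1"
      and type_I: "(\<lambda>n. \<integral>y. \<phi> n y \<partial>P0 n) \<longlonglongrightarrow> 0"
      and type_II: "\<forall>\<^sub>F n in sequentially. \<forall>A \<in> \<A> n. \<forall>\<beta> \<in> Theta (p n) A. M * eps n \<le> l2dist (p n) \<beta> (\<beta>0 n) \<longrightarrow>
          (\<integral>y. 1 - \<phi> n y \<partial>data_measure n (p n) (X n) \<sigma>0 \<beta>) \<le> exp (- b * real n * (eps n)^2)"
    using tests unfolding P0_def measurable_cong_sets[OF sets_data_measure refl] by blast
  have \<delta>: "(b - a) / 2 > 0" and ab': "a + (b - a) / 2 < b"
    using ab by (simp_all add: field_simps)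
  obtain \<Omega> :: "nat \<Rightarrow> 'w \<Rightarrow> nat set \<Rightarrow> (nat \<Rightarrow> real) set"
    where \<Omega>: "\<And>n \<omega> A. \<Omega> n \<omega> A \<in> sets (param_space n)"
      "\<And>\<omega> e. \<omega> \<in> space Q \<Longrightarrow> e > 0 \<Longrightarrow> \<forall>\<^sub>F n in sequentially. \<forall>A \<in> \<A> n. measure (P0 n) (space (P0 n) - \<Omega> n \<omega> A) < e"
      and evidence_\<Omega>: "\<And>n \<omega> A y. \<omega> \<in> space Q \<Longrightarrow> A \<in> \<A> n \<Longrightarrow> y \<in> \<Omega> n \<omega> A \<Longrightarrow>
          exp (- (a + (b - a) / 2) * real n * (eps n)^2) \<le> (\<integral>\<beta>. indicator (Theta (p n) A) \<beta> *
            (lik n (p n) (X n) \<sigma>0 \<beta> y / lik n (p n) (X n) \<sigma>0 (\<beta>0 n) y) \<partial>guided_prior (p n) A \<sigma>0 \<tau>0 ac bc \<sigma>\<eta> (z n \<omega>))"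
    using evidence[OF \<delta>] unfolding P0_def sets_data_measure by blast
  have P0: "prob_space (P0 n)" for n
    unfolding P0_def using \<sigma>0 by (rule prob_space_data_measure)
  have Bad_sets: "Bad n \<in> sets (Q \<Otimes>\<^sub>M P0 n)" for n
    unfolding Bad_def P0_def using sets_l2dist_ge_Int_Theta
    by (intro sets_active_posterior_gt[OF hyper z An])
  have G_sets: "G n \<in> sets Q" for n
    unfolding G_def by (rule sets_level_set_finite_range[of Q "An n" "p n"]) (use An in auto)
  have sections: "(\<lambda>n. indicator (G n) \<omega> * measure (P0 n) (Pair \<omega> -` Bad n)) \<longlonglongrightarrow> 0"
    if \<omega>: "\<omega> \<in> space Q" for \<omega>
  proof -
    have "(\<lambda>n. if An n \<omega> \<in> \<A> n then measure (P0 n) {y \<in> space (param_space n).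
          \<epsilon> < active_posterior n (p n) (X n) \<sigma>0 (guided_prior (p n) (An n \<omega>) \<sigma>0 \<tau>0 ac bc \<sigma>\<eta> (z n \<omega>)) (An n \<omega>) y
            {\<beta>. M * eps n \<le> l2dist (p n) \<beta> (\<beta>0 n)}} else 0) \<longlonglongrightarrow> 0"
      (is "?tail \<longlonglongrightarrow> 0")
      unfolding P0_def
      by (rule measure_active_posterior_gt_tendsto_0[where \<Omega> = "\<lambda>n. \<Omega> n \<omega>" and z = "\<lambda>n. z n \<omega>"
            and a = "a + (b - a) / 2", OF \<sigma>0 hyper \<A> \<phi> type_I[unfolded P0_def] type_II \<Omega>(1)
            \<Omega>(2)[OF \<omega>, unfolded P0_def] evidence_\<Omega>[OF \<omega>] ab' rate \<epsilon>])
    moreover have "indicator (G n) \<omega> * measure (P0 n) (Pair \<omega> -` Bad n) = ?tail n" for n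
      using \<omega> by (simp add: G_def Bad_def P0_def space_pair_measure space_data_measure)
    ultimately show ?thesis
      by simp
  qed
  have "(\<lambda>n. measure (Q \<Otimes>\<^sub>M P0 n) (Bad n)) \<longlonglongrightarrow> 0"
    using admissible unfolding G_def[symmetric]
    by (rule measure_pair_measure_tendsto_0[OF Q P0 Bad_sets G_sets _ sections])
  then have "\<forall>\<^sub>F n in sequentially. measure (Q \<Otimes>\<^sub>M P0 n) (Bad n) < e"
    using e by (intro order_tendstoD) auto
  then show "?small \<epsilon> e"
    using Bad_sets unfolding Bad_def P0_def by (auto elim!: eventually_mono)
qed

theorem theorem3:
  fixes Q :: "'w measure"
    and p :: "nat \<Rightarrow> nat"
    and X :: "nat \<Rightarrow> nat \<Rightarrow> nat \<Rightarrow> real"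
    and \<beta>0 :: "nat \<Rightarrow> nat \<Rightarrow> real"
    and \<sigma>0 \<tau>0 ac bc \<sigma>\<eta> \<phi>0 K Cz B C CF CD :: real
    and z bhat :: "nat \<Rightarrow> 'w \<Rightarrow> nat \<Rightarrow> real"
    and An :: "nat \<Rightarrow> 'w \<Rightarrow> nat set"
    and t u r q L :: "nat \<Rightarrow> real"
    and cT :: "real \<Rightarrow> real"
  defines "S0 \<equiv> \<lambda>n. supp (p n) (\<beta>0 n)"
    and "s0 \<equiv> \<lambda>n. real (card (supp (p n) (\<beta>0 n)))"
    and "m \<equiv> \<lambda>n. C * real (card (supp (p n) (\<beta>0 n))) * L n"
    and "eps \<equiv> \<lambda>n. sqrt (real (card (supp (p n) (\<beta>0 n)))
                       * ln (C * real (card (supp (p n) (\<beta>0 n))) * L n) / real n)"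
    and "Pr \<equiv> \<lambda>n A \<omega>. guided_prior (p n) A \<sigma>0 \<tau>0 ac bc \<sigma>\<eta> (z n \<omega>)"
    and "Pb \<equiv> \<lambda>n \<beta>. data_measure n (p n) (X n) \<sigma>0 \<beta>"
  assumes Q: "prob_space Q"
    and sigma0: "\<sigma>0 > 0"
    \<comment> \<open>screening quantities are measurable w.r.t. the auxiliary (screening) data\<close>
    and meas_z: "\<And>n j. (\<lambda>\<omega>. z n \<omega> j) \<in> borel_measurable Q"
    and meas_bhat: "\<And>n j. (\<lambda>\<omega>. bhat n \<omega> j) \<in> borel_measurable Q"
    and meas_A: "\<And>n A. {\<omega> \<in> space Q. An n \<omega> = A} \<in> sets Q"
    and A_range: "\<And>n \<omega>. \<omega> \<in> space Q \<Longrightarrow> An n \<omega> \<subseteq> {..<p n}"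
    \<comment> \<open>(A1)\<close>
    and A1a: "(\<lambda>n. s0 n * ln (real (p n)) / real n) \<longlonglongrightarrow> 0"
    and A1b: "filterlim (\<lambda>n. s0 n * ln (real (p n))) at_top sequentially"
    \<comment> \<open>(A2)\<close>
    and A2: "\<phi>0 > 0" "K \<ge> 1"
      "\<And>n v. real (card (supp (p n) v)) \<le> K * s0 n \<Longrightarrow>
         (l2norm n (lin_pred (X n) (p n) v))^2 \<ge> real n * \<phi>0^2 * (l2norm (p n) v)^2"
    \<comment> \<open>(A4)\<close>
    and A4: "\<And>n \<omega> j. \<omega> \<in> space Q \<Longrightarrow> j < p n \<Longrightarrow> \<bar>z n \<omega> j\<bar> \<le> Cz"
    \<comment> \<open>(A5)\<close>
    and A5: "\<And>n j. j \<in> S0 n \<Longrightarrow> \<bar>\<beta>0 n j\<bar> \<le> B"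
    \<comment> \<open>(A6)\<close>
    and A6: "\<tau>0 > 0" "ac > 0" "bc > 0" "\<sigma>\<eta> > 0"
    \<comment> \<open>(A9)\<close>
    and A9: "filterlim (\<lambda>n. real (p n)) at_top sequentially"
      "(\<lambda>n. ln (real (p n)) / real n) \<longlonglongrightarrow> 0"
    \<comment> \<open>(A11)\<close>
    and A11: "\<exists>Cop. \<forall>\<^sub>F n in sequentially. \<forall>v.
       l2norm n (lin_pred (X n) (p n) v) \<le> Cop * sqrt (real n) * l2norm (p n) v"
    \<comment> \<open>(B1)\<close>
    and B1: "\<And>n \<omega>. \<omega> \<in> space Q \<Longrightarrow>
       {j. j < p n \<and> \<bar>bhat n \<omega> j\<bar> > t n} \<union> {j. j < p n \<and> z n \<omega> j > u n} \<subseteq> An n \<omega>"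
    \<comment> \<open>(B2)\<close>
    and B2: "\<And>n. r n > t n" "\<And>n. q n > u n"
      "(\<lambda>n. measure Q {\<omega> \<in> space Q. \<forall>j \<in> S0 n. \<bar>bhat n \<omega> j\<bar> \<ge> r n}) \<longlonglongrightarrow> 1"
      "(\<lambda>n. measure Q {\<omega> \<in> space Q. \<forall>j \<in> S0 n. z n \<omega> j \<ge> q n}) \<longlonglongrightarrow> 1"
    \<comment> \<open>(B3)\<close>
    and B3: "C > 0" "\<exists>(k::nat) c. \<forall>\<^sub>F n in sequentially. L n \<le> c * (ln (real (p n)))^k"
      "(\<lambda>n. measure Q {\<omega> \<in> space Q. real (card (An n \<omega>)) \<le> C * s0 n * L n}) \<longlonglongrightarrow> 1"
    \<comment> \<open>(B4)\<close>
    and B4: "\<exists>M0. \<forall>M \<ge> M0. \<exists>\<phi> :: nat \<Rightarrow> (nat \<Rightarrow> real) \<Rightarrow> real.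
       (\<forall>n. \<phi> n \<in> borel_measurable (Pb n (\<beta>0 n)) \<and> (\<forall>y. 0 \<le> \<phi> n y \<and> \<phi> n y \<le> 1)) \<and>
       (\<lambda>n. \<integral>y. \<phi> n y \<partial>(Pb n (\<beta>0 n))) \<longlonglongrightarrow> 0 \<and>
       (\<forall>\<^sub>F n in sequentially. \<forall>A \<in> active_sets (p n) (S0 n) (m n). \<forall>\<beta> \<in> Theta (p n) A.
          l2dist (p n) \<beta> (\<beta>0 n) \<ge> M * eps n \<longrightarrow>
          (\<integral>y. 1 - \<phi> n y \<partial>(Pb n \<beta>)) \<le> exp (- cT M * real n * (eps n)^2))"
    and s0logm: "filterlim (\<lambda>n. s0 n * ln (m n)) at_top sequentially"
    \<comment> \<open>sieve / prior mass condition\<close>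
    and CF: "CF > 0"
      "\<And>n \<omega> A. \<omega> \<in> space Q \<Longrightarrow> A \<in> active_sets (p n) (S0 n) (m n) \<Longrightarrow>
         \<exists>F \<in> sets (param_space (p n)). F \<subseteq> Theta (p n) A \<and>
           measure (Pr n A \<omega>) (space (param_space (p n)) - F) \<le> exp (- CF * real n * (eps n)^2)"
    \<comment> \<open>evidence lower bound\<close>
    and CD: "CD > 0"
      "\<And>\<delta>. \<delta> > 0 \<Longrightarrow> \<exists>\<Omega> :: nat \<Rightarrow> 'w \<Rightarrow> nat set \<Rightarrow> (nat \<Rightarrow> real) set.
         (\<forall>n \<omega> A. \<Omega> n \<omega> A \<in> sets (Pb n (\<beta>0 n))) \<and>
         (\<forall>\<omega> \<in> space Q. \<forall>e > 0. \<forall>\<^sub>F n in sequentially. \<forall>A \<in> active_sets (p n) (S0 n) (m n).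
            measure (Pb n (\<beta>0 n)) (space (Pb n (\<beta>0 n)) - \<Omega> n \<omega> A) < e) \<and>
         (\<forall>n. \<forall>\<omega> \<in> space Q. \<forall>A \<in> active_sets (p n) (S0 n) (m n). \<forall>y \<in> \<Omega> n \<omega> A.
            (\<integral>\<beta>. indicator (Theta (p n) A) \<beta> *
                 (lik n (p n) (X n) \<sigma>0 \<beta> y / lik n (p n) (X n) \<sigma>0 (\<beta>0 n) y) \<partial>(Pr n A \<omega>))
              \<ge> exp (- (CD + \<delta>) * real n * (eps n)^2))"
    and gap: "\<exists>M0. \<forall>M \<ge> M0. min (cT M) CF > CD"
  shows "\<exists>M0. \<forall>M \<ge> M0. \<forall>\<epsilon> > 0. \<forall>e > 0. \<forall>\<^sub>F n in sequentially.
     \<exists>E \<in> sets (Q \<Otimes>\<^sub>M Pb n (\<beta>0 n)).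
       {(\<omega>, y) \<in> space (Q \<Otimes>\<^sub>M Pb n (\<beta>0 n)).
          active_posterior n (p n) (X n) \<sigma>0 (Pr n (An n \<omega>) \<omega>) (An n \<omega>) y
            {\<beta>. l2dist (p n) \<beta> (\<beta>0 n) \<ge> M * eps n} > \<epsilon>} \<subseteq> E
       \<and> measure (Q \<Otimes>\<^sub>M Pb n (\<beta>0 n)) E < e"
proof -
  have admissible: "(\<lambda>n. measure Q {\<omega> \<in> space Q. An n \<omega> \<in> active_sets (p n) (S0 n) (m n)}) \<longlonglongrightarrow> 1"
  proof (rule measure_active_set_admissible_tendsto_1[OF Q meas_bhat meas_A A_range _ _ B2(1) B2(3)])
    show "S0 n \<subseteq> {..<p n}" for n
      by (auto simp: S0_def supp_def)
    show "{j. j < p n \<and> t n < \<bar>bhat n \<omega> j\<bar>} \<subseteq> An n \<omega>" if "\<omega> \<in> space Q" for n \<omega>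
      using B1[OF that] by blast
    show "(\<lambda>n. measure Q {\<omega> \<in> space Q. real (card (An n \<omega>)) \<le> m n}) \<longlonglongrightarrow> 1"
      using B3(3) by (simp add: s0_def m_def)
  qed
  have rate: "filterlim (\<lambda>n. real n * (eps n)^2) at_top sequentially"
    using filterlim_mult_sqrt_div_squared_at_top[OF s0logm] unfolding eps_def s0_def m_def .
  note contraction = guided_posterior_contraction[OF Q sigma0 A6(1-3) meas_z meas_A A_range
      active_sets_subset_Pow admissible _ CD(2)[unfolded Pr_def Pb_def] _ rate]
  show ?thesis
    unfolding Pr_def Pb_def eventually_at_top_linorder[symmetric]
    using B4[unfolded Pb_def, folded eventually_at_top_linorder] gap[folded eventually_at_top_linorder]
  proof eventually_elim
    case (elim M)
    show ?case
      by (rule contraction) (use elim in auto)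
  qed
qed

end
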